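(* Let $\Phi:\{0,1\}^\omega\to\{0,1\}^\omega$ be a computable injection and let $b$ be a computable $\Phi$-martingale. Then for every $\sigma$ the limit $$b'(\sigma)=\lim_{n\to\infty}\sum_{\tau\in\{0,1\}^n} b(\tau)\,\frac{\mu([\sigma]\cap\Phi^{-1}([\tau]))}{\mu([\sigma])}$$ exists, and $b'$ is a total computable martingale (with respect to $\mu$).
   Context: $\mu$ is the uniform (fair-coin) measure on $\{0,1\}^\omega$ and $[\tau]$ the set of sequences extending $\tau$. For a computable $\Phi$, a $\Phi$-martingale is a function $b:\{0,1\}^{<\omega}\to\mathbb{R}_{\ge0}$ with $b(\tau)\mu(\Phi^{-1}[\tau])=b(\tau0)\mu(\Phi^{-1}[\tau0])+b(\tau1)\mu(\Phi^{-1}[\tau1])$ for all $\tau$; it is computable if $b(\tau)$ is a computable real uniformly in $\tau$. A (total) martingale is $m:\{0,1\}^{<\omega}\to\mathbb{R}_{\ge0}$ with $m(\sigma0)+m(\sigma1)=2m(\sigma)$. *)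

theory Defs
  imports "HOL-Probability.Probability" "HOL-Library.Nat_Bijection"
begin

datatype recf = Z | S | Proj nat | Cn recf "recf list" | Pr recf recf | Mn recf

inductive eval :: "recf \<Rightarrow> nat list \<Rightarrow> nat \<Rightarrow> bool" where
  eval_Z: "eval Z xs 0"
| eval_S: "eval S (x # xs) (Suc x)"
| eval_Proj: "i < length xs \<Longrightarrow> eval (Proj i) xs (xs ! i)"
| eval_Cn: "list_all2 (\<lambda>g y. eval g xs y) gs ys \<Longrightarrow> eval f ys z \<Longrightarrow> eval (Cn f gs) xs z"
| eval_Pr0: "eval f xs z \<Longrightarrow> eval (Pr f g) (0 # xs) z"
| eval_PrS: "eval (Pr f g) (n # xs) y \<Longrightarrow> eval g (n # y # xs) z \<Longrightarrow> eval (Pr f g) (Suc n # xs) z"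
| eval_Mn: "eval f (n # xs) 0 \<Longrightarrow> (\<forall>m<n. \<exists>y. eval f (m # xs) (Suc y)) \<Longrightarrow> eval (Mn f) xs n"

definition computable_nat :: "(nat \<Rightarrow> nat) \<Rightarrow> bool" where
  "computable_nat h \<longleftrightarrow> (\<exists>f. \<forall>n. eval f [n] (h n))"

definition code_str :: "bool list \<Rightarrow> nat" where
  "code_str \<sigma> = list_encode (map of_bool \<sigma>)"

definition rat_decode :: "nat \<Rightarrow> real" where
  "rat_decode n = (case prod_decode n of (a, b) \<Rightarrow> of_int (int_decode a) / real (Suc b))"

definition computable_strfun :: "(bool list \<Rightarrow> real) \<Rightarrow> bool" where
  "computable_strfun b \<longleftrightarrow> (\<exists>a. computable_nat a \<and>
     (\<forall>\<tau> k. \<bar>rat_decode (a (prod_encode (code_str \<tau>, k))) - b \<tau>\<bar> \<le> 1 / 2 ^ k))"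

definition init_seg :: "(nat \<Rightarrow> bool) \<Rightarrow> nat \<Rightarrow> bool list" where
  "init_seg X k = map X [0..<k]"

text \<open>Computable (total) maps of Cantor space: the n-th output bit is computed from a finite
  initial segment of the input; output 0/1 means the bit, anything else means "not yet".\<close>
definition computable_cantor :: "((nat \<Rightarrow> bool) \<Rightarrow> (nat \<Rightarrow> bool)) \<Rightarrow> bool" where
  "computable_cantor \<Phi> \<longleftrightarrow> (\<exists>h. computable_nat h \<and>
     (\<forall>X n. (\<exists>k. h (prod_encode (code_str (init_seg X k), n)) < 2) \<and>
            (\<forall>k. h (prod_encode (code_str (init_seg X k), n)) < 2 \<longrightarrow>
                 h (prod_encode (code_str (init_seg X k), n)) = of_bool (\<Phi> X n))))"

definition cantor :: "(nat \<Rightarrow> bool) measure" where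
  "cantor = PiM UNIV (\<lambda>_. measure_pmf (pmf_of_set (UNIV :: bool set)))"

definition cyl :: "bool list \<Rightarrow> (nat \<Rightarrow> bool) set" where
  "cyl \<tau> = {X. \<forall>i<length \<tau>. X i = \<tau> ! i}"

definition mu :: "(nat \<Rightarrow> bool) set \<Rightarrow> real" where
  "mu A = measure cantor A"

definition Phi_martingale :: "((nat \<Rightarrow> bool) \<Rightarrow> (nat \<Rightarrow> bool)) \<Rightarrow> (bool list \<Rightarrow> real) \<Rightarrow> bool" where
  "Phi_martingale \<Phi> b \<longleftrightarrow> (\<forall>\<tau>. b \<tau> \<ge> 0) \<and>
     (\<forall>\<tau>. b \<tau> * mu (\<Phi> -` cyl \<tau>) =
           b (\<tau> @ [False]) * mu (\<Phi> -` cyl (\<tau> @ [False])) + b (\<tau> @ [True]) * mu (\<Phi> -` cyl (\<tau> @ [True])))"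

definition martingale :: "(bool list \<Rightarrow> real) \<Rightarrow> bool" where
  "martingale m \<longleftrightarrow> (\<forall>\<sigma>. m \<sigma> \<ge> 0) \<and> (\<forall>\<sigma>. m (\<sigma> @ [False]) + m (\<sigma> @ [True]) = 2 * m \<sigma>)"

end

theory Submission
  imports Defs
begin

text \<open>
  Since \<open>\<Phi>\<close> is continuous and injective on the compact Cantor space, for every \<open>\<sigma>\<close> the images of
  \<open>[\<sigma>]\<close> and of its complement are already separated at some finite output depth \<open>N(\<sigma>)\<close>.
  For \<open>n \<ge> N(\<sigma>)\<close> every preimage \<open>\<Phi>\<^sup>-\<^sup>1[\<tau>]\<close> with \<open>|\<tau>| = n\<close> lies inside \<open>[\<sigma>]\<close> or misses it,
  so the \<open>\<Phi>\<close>-martingale equation makes the sums defining \<open>b'(\<sigma>)\<close> constant from \<open>N(\<sigma>)\<close> on: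
  the limit is attained, and additivity of \<open>\<mu>\<close> turns it into a martingale.
  By compactness, \<open>N(\<sigma>)\<close> and an input depth \<open>L(\<sigma>)\<close> that determines the first \<open>N(\<sigma>)\<close> output
  bits can be found by unbounded search. Then \<open>b'(\<sigma>)\<close> is the average of \<open>b\<close> over the
  \<open>N(\<sigma>)\<close>-bit images of the extensions of \<open>\<sigma>\<close> of length \<open>L(\<sigma>)\<close>, a finite sum that can be
  approximated from approximations to \<open>b\<close>.
\<close>

section \<open>Cylinders in Cantor space\<close>

abbreviation coin_flip :: "nat \<Rightarrow> bool measure" where
  "coin_flip \<equiv> \<lambda>_. measure_pmf (pmf_of_set UNIV)"

lemma space_cantor[simp]: "space cantor = UNIV"
  by (simp add: cantor_def space_PiM)

lemma prob_space_cantor: "prob_space cantor"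
  unfolding cantor_def by (rule prob_space_PiM) (simp add: prob_space_measure_pmf)

interpretation C: prob_space cantor by (rule prob_space_cantor)

lemma cyl_eq_prod_emb:
  "cyl \<rho> = prod_emb UNIV coin_flip {..<length \<rho>} (PiE {..<length \<rho>} (\<lambda>i. {\<rho>!i}))"
  by (rule set_eqI) (simp add: cyl_def prod_emb_def space_PiM restrict_PiE_iff Pi_iff Ball_def)

lemma cyl_sets[simp]: "cyl \<rho> \<in> sets cantor"
  unfolding cyl_eq_prod_emb cantor_def by (rule sets_PiM_I) auto

lemma cyl_Nil[simp]: "cyl [] = UNIV"
  by (simp add: cyl_def)

lemma mu_cyl: "mu (cyl \<rho>) = 1 / 2 ^ length \<rho>"
proof -
  have "emeasure cantor (cyl \<rho>) = (\<Prod>i\<in>{..<length \<rho>}. emeasure (coin_flip i) {\<rho>!i})"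
    unfolding cyl_eq_prod_emb cantor_def
    by (rule emeasure_PiM_emb) (auto simp: prob_space_measure_pmf)
  also have "\<dots> = (\<Prod>i\<in>{..<length \<rho>}. ennreal (1/2))"
    by (intro prod.cong refl) (simp add: emeasure_pmf_single)
  also have "\<dots> = ennreal ((1/2) ^ length \<rho>)"
    by (simp only: prod_constant card_lessThan) (rule ennreal_power, simp)
  finally have "ennreal (mu (cyl \<rho>)) = ennreal ((1/2) ^ length \<rho>)"
    unfolding mu_def C.emeasure_eq_measure .
  then have "mu (cyl \<rho>) = (1/2) ^ length \<rho>"
    by (subst (asm) ennreal_inj) (auto simp: mu_def)
  then show ?thesis by (simp add: power_divide)
qed

lemma length_init_seg[simp]: "length (init_seg X k) = k"
  by (simp add: init_seg_def)

lemma init_seg_nth: "j < n \<Longrightarrow> init_seg X n ! j = X j"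
  by (simp add: init_seg_def)

lemma take_init_seg: "k \<le> L \<Longrightarrow> take k (init_seg X L) = init_seg X k"
  by (rule nth_equalityI) (auto simp: init_seg_def)

lemma init_seg_eq_mono: "init_seg X L = init_seg Y L \<Longrightarrow> k \<le> L \<Longrightarrow> init_seg X k = init_seg Y k"
  by (metis take_init_seg)

definition zero_ext :: "bool list \<Rightarrow> nat \<Rightarrow> bool" where
  "zero_ext \<rho> i = (i < length \<rho> \<and> \<rho> ! i)"

lemma init_seg_zero_ext: "k \<le> length \<rho> \<Longrightarrow> init_seg (zero_ext \<rho>) k = take k \<rho>"
  by (rule nth_equalityI) (auto simp: init_seg_def zero_ext_def)

lemma init_seg_eq_nth: "init_seg X n = init_seg Y n \<Longrightarrow> j < n \<Longrightarrow> X j = Y j"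
  by (metis init_seg_nth)

lemma init_seg_map: "init_seg X n = map X [0..<n]"
  by (simp add: init_seg_def)

lemma mem_cyl_iff: "X \<in> cyl \<rho> \<longleftrightarrow> init_seg X (length \<rho>) = \<rho>"
proof -
  have "init_seg X (length \<rho>) = \<rho> \<longleftrightarrow> (\<forall>i<length \<rho>. X i = \<rho>!i)"
    unfolding init_seg_def by (subst list_eq_iff_nth_eq) simp
  then show ?thesis by (simp add: cyl_def)
qed

lemma cyl_disjoint:
  assumes "length \<rho> = length \<rho>'" "\<rho> \<noteq> \<rho>'"
  shows "cyl \<rho> \<inter> cyl \<rho>' = {}"
  using assms by (auto simp: mem_cyl_iff)

lemma mu_UN_cyl:
  assumes "finite R" "\<And>\<rho>. \<rho> \<in> R \<Longrightarrow> length \<rho> = L"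
  shows "mu (\<Union>\<rho>\<in>R. cyl \<rho>) = card R / 2 ^ L"
proof -
  have "disjoint_family_on cyl R"
    unfolding disjoint_family_on_def using assms(2) cyl_disjoint by metis
  then have "mu (\<Union>\<rho>\<in>R. cyl \<rho>) = (\<Sum>\<rho>\<in>R. mu (cyl \<rho>))"
    unfolding mu_def using assms(1) by (intro C.finite_measure_finite_Union) auto
  also have "\<dots> = (\<Sum>\<rho>\<in>R. 1 / 2 ^ L)"
    by (intro sum.cong refl) (simp add: mu_cyl assms)
  finally show ?thesis by simp
qed

lemma cyl_eq_Un_snoc: "cyl \<sigma> = cyl (\<sigma> @ [False]) \<union> cyl (\<sigma> @ [True])"
proof (rule set_eqI)
  fix X
  have "init_seg X (Suc (length \<sigma>)) = init_seg X (length \<sigma>) @ [X (length \<sigma>)]"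
    by (simp add: init_seg_def)
  then show "X \<in> cyl \<sigma> \<longleftrightarrow> X \<in> cyl (\<sigma> @ [False]) \<union> cyl (\<sigma> @ [True])"
    by (cases "X (length \<sigma>)") (auto simp: mem_cyl_iff)
qed

lemma mu_cyl_inter_split:
  assumes "B \<in> sets cantor"
  shows "mu (cyl \<sigma> \<inter> B) = mu (cyl (\<sigma> @ [False]) \<inter> B) + mu (cyl (\<sigma> @ [True]) \<inter> B)"
proof -
  have "cyl \<sigma> \<inter> B = (cyl (\<sigma> @ [False]) \<inter> B) \<union> (cyl (\<sigma> @ [True]) \<inter> B)"
    using cyl_eq_Un_snoc[of \<sigma>] by blast
  moreover have "cyl (\<sigma> @ [False]) \<inter> cyl (\<sigma> @ [True]) = {}"
    by (rule cyl_disjoint) auto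
  ultimately show ?thesis unfolding mu_def
    using assms by (subst C.finite_measure_Union[symmetric]) auto
qed

lemma sum_lists_length_Suc:
  fixes f :: "bool list \<Rightarrow> 'a::comm_monoid_add"
  shows "(\<Sum>\<tau>\<in>{\<tau>. length \<tau> = Suc m}. f \<tau>) = (\<Sum>\<tau>\<in>{\<tau>. length \<tau> = m}. f (\<tau> @ [False]) + f (\<tau> @ [True]))"
proof -
  let ?T = "{\<tau> :: bool list. length \<tau> = m}"
  have "{\<tau> :: bool list. length \<tau> = Suc m} = (\<lambda>\<tau>. \<tau> @ [False]) ` ?T \<union> (\<lambda>\<tau>. \<tau> @ [True]) ` ?T"
  proof (rule set_eqI, rule iffI)
    fix \<tau> :: "bool list" assume "\<tau> \<in> {\<tau>. length \<tau> = Suc m}"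
    then have "\<tau> \<noteq> []" "length (butlast \<tau>) = m" by auto
    then have "\<tau> = butlast \<tau> @ [last \<tau>]" "length (butlast \<tau>) = m" by simp_all
    then show "\<tau> \<in> (\<lambda>\<tau>. \<tau> @ [False]) ` ?T \<union> (\<lambda>\<tau>. \<tau> @ [True]) ` ?T"
      by (cases "last \<tau>") (metis (mono_tags, lifting) UnI1 UnI2 image_eqI mem_Collect_eq)+
  qed auto
  then have "(\<Sum>\<tau>\<in>{\<tau>. length \<tau> = Suc m}. f \<tau>)
      = (\<Sum>\<tau>\<in>(\<lambda>\<tau>. \<tau> @ [False]) ` ?T. f \<tau>) + (\<Sum>\<tau>\<in>(\<lambda>\<tau>. \<tau> @ [True]) ` ?T. f \<tau>)"
    by (simp only:) (rule sum.union_disjoint, auto simp: finite_list_length)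
  also have "\<dots> = (\<Sum>\<tau>\<in>?T. f (\<tau> @ [False])) + (\<Sum>\<tau>\<in>?T. f (\<tau> @ [True]))"
    by (subst sum.reindex, simp add: inj_on_def)+ simp
  finally show ?thesis by (simp add: sum.distrib)
qed

section \<open>General recursive functions\<close>

definition recfn :: "nat \<Rightarrow> (nat list \<Rightarrow> nat) \<Rightarrow> bool" where
  "recfn k f \<longleftrightarrow> (\<exists>r. \<forall>xs. length xs = k \<longrightarrow> eval r xs (f xs))"

lemma recfn_cong: "recfn k f \<Longrightarrow> (\<And>xs. length xs = k \<Longrightarrow> f xs = g xs) \<Longrightarrow> recfn k g"
  unfolding recfn_def by metis

lemma recfn_Z: "recfn k (\<lambda>_. 0)"
  unfolding recfn_def using eval_Z by blast

lemma recfn_proj: "i < k \<Longrightarrow> recfn k (\<lambda>xs. xs ! i)"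
  unfolding recfn_def using eval_Proj by auto

lemma length_Suc_0_conv_hd: "length xs = Suc 0 \<Longrightarrow> xs = [hd xs]"
  by (cases xs) auto

lemma hd_conv_nth_0: "0 < length xs \<Longrightarrow> hd xs = xs ! 0"
  by (simp add: hd_conv_nth)

lemmas small_numerals_nat = numeral_2_eq_2 numeral_3_eq_3 One_nat_def

lemma recfn_S: "recfn 1 (\<lambda>xs. Suc (hd xs))"
  unfolding recfn_def
proof (intro exI allI impI)
  fix xs :: "nat list" assume "length xs = 1"
  then have "xs = [hd xs]" by (intro length_Suc_0_conv_hd) simp
  then show "eval S xs (Suc (hd xs))" by (metis eval_S)
qed

lemma recfn_Cn1: "recfn 1 f \<Longrightarrow> recfn k g \<Longrightarrow> recfn k (\<lambda>xs. f [g xs])"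
proof -
  assume "recfn 1 f" "recfn k g"
  then obtain rf rg where f: "\<And>xs. length xs = 1 \<Longrightarrow> eval rf xs (f xs)"
    and g: "\<And>xs. length xs = k \<Longrightarrow> eval rg xs (g xs)" unfolding recfn_def by blast
  show ?thesis unfolding recfn_def
    by (rule exI[of _ "Cn rf [rg]"]) (auto intro!: eval_Cn f g)
qed

lemma recfn_Cn2: "recfn 2 f \<Longrightarrow> recfn k g \<Longrightarrow> recfn k h \<Longrightarrow> recfn k (\<lambda>xs. f [g xs, h xs])"
proof -
  assume "recfn 2 f" "recfn k g" "recfn k h"
  then obtain rf rg rh where f: "\<And>xs. length xs = 2 \<Longrightarrow> eval rf xs (f xs)"
    and g: "\<And>xs. length xs = k \<Longrightarrow> eval rg xs (g xs)"
    and h: "\<And>xs. length xs = k \<Longrightarrow> eval rh xs (h xs)" unfolding recfn_def by blast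
  show ?thesis unfolding recfn_def
    by (rule exI[of _ "Cn rf [rg, rh]"]) (auto intro!: eval_Cn f g h)
qed

lemma recfn_Pr:
  assumes "recfn k f" "recfn (Suc (Suc k)) g"
  shows "recfn (Suc k) (\<lambda>xs. rec_nat (f (tl xs)) (\<lambda>n y. g (n # y # tl xs)) (hd xs))"
proof -
  obtain rf rg where f: "\<And>xs. length xs = k \<Longrightarrow> eval rf xs (f xs)"
    and g: "\<And>xs. length xs = Suc (Suc k) \<Longrightarrow> eval rg xs (g xs)"
    using assms unfolding recfn_def by blast
  have *: "eval (Pr rf rg) (n # ys) (rec_nat (f ys) (\<lambda>n y. g (n # y # ys)) n)"
    if "length ys = k" for n ys
  proof (induction n)
    case 0 then show ?case using f that by (auto intro: eval_Pr0)
  next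
    case (Suc n) then show ?case using g that by (auto intro: eval_PrS)
  qed
  show ?thesis unfolding recfn_def
  proof (intro exI allI impI)
    fix xs :: "nat list" assume "length xs = Suc k"
    then obtain n ys where "xs = n # ys" "length ys = k" by (cases xs) auto
    then show "eval (Pr rf rg) xs (rec_nat (f (tl xs)) (\<lambda>n y. g (n # y # tl xs)) (hd xs))"
      using * by simp
  qed
qed

lemma recfn_Mn:
  assumes "recfn (Suc k) f" "\<And>xs. length xs = k \<Longrightarrow> \<exists>n. f (n # xs) = 0"
  shows "recfn k (\<lambda>xs. LEAST n. f (n # xs) = 0)"
proof -
  obtain rf where f: "\<And>xs. length xs = Suc k \<Longrightarrow> eval rf xs (f xs)"
    using assms unfolding recfn_def by blast
  show ?thesis unfolding recfn_def
  proof (intro exI allI impI)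
    fix xs :: "nat list" assume l: "length xs = k"
    define n where "n = (LEAST n. f (n # xs) = 0)"
    have n0: "f (n # xs) = 0" unfolding n_def using assms(2)[OF l] by (rule LeastI_ex)
    have "\<forall>m<n. \<exists>y. eval rf (m # xs) (Suc y)"
    proof (intro allI impI)
      fix m assume "m < n"
      then have "f (m # xs) \<noteq> 0" unfolding n_def by (rule not_less_Least)
      then obtain y where "f (m # xs) = Suc y" by (cases "f (m # xs)") auto
      then show "\<exists>y. eval rf (m # xs) (Suc y)" using f[of "m # xs"] l by auto
    qed
    then show "eval (Mn rf) xs n" using f[of "n # xs"] l n0 by (auto intro: eval_Mn)
  qed
qed

section \<open>Computable functions on the naturals\<close>

abbreviation pfst :: "nat \<Rightarrow> nat" where "pfst p \<equiv> fst (prod_decode p)"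
abbreviation psnd :: "nat \<Rightarrow> nat" where "psnd p \<equiv> snd (prod_decode p)"

lemma computable_nat_iff_recfn: "computable_nat f \<longleftrightarrow> recfn 1 (\<lambda>xs. f (hd xs))"
proof
  assume "computable_nat f"
  then obtain r where "\<And>n. eval r [n] (f n)" unfolding computable_nat_def by blast
  then show "recfn 1 (\<lambda>xs. f (hd xs))" unfolding recfn_def
    by (metis One_nat_def length_Suc_0_conv_hd)
next
  assume "recfn 1 (\<lambda>xs. f (hd xs))"
  then obtain r where "\<And>xs. length xs = 1 \<Longrightarrow> eval r xs (f (hd xs))" unfolding recfn_def by blast
  then show "computable_nat f" unfolding computable_nat_def
    by (metis One_nat_def length_Cons list.sel(1) list.size(3))
qed

definition computable2 :: "(nat \<Rightarrow> nat \<Rightarrow> nat) \<Rightarrow> bool" where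
  "computable2 F \<longleftrightarrow> recfn 2 (\<lambda>xs. F (xs!0) (xs!1))"
definition computable3 :: "(nat \<Rightarrow> nat \<Rightarrow> nat \<Rightarrow> nat) \<Rightarrow> bool" where
  "computable3 F \<longleftrightarrow> recfn 3 (\<lambda>xs. F (xs!0) (xs!1) (xs!2))"

lemma recfn_comp1: "computable_nat f \<Longrightarrow> recfn k g \<Longrightarrow> recfn k (\<lambda>xs. f (g xs))"
  unfolding computable_nat_iff_recfn by (drule (1) recfn_Cn1) simp

lemma recfn_comp2: "computable2 F \<Longrightarrow> recfn k g \<Longrightarrow> recfn k h \<Longrightarrow> recfn k (\<lambda>xs. F (g xs) (h xs))"
  unfolding computable2_def by (drule (2) recfn_Cn2) simp

lemma recfn_const: "recfn k (\<lambda>_. c)"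
proof (induction c)
  case 0 show ?case by (rule recfn_Z)
next
  case (Suc c)
  have "recfn k (\<lambda>xs. (\<lambda>ys. Suc (hd ys)) [c])" by (rule recfn_Cn1[OF recfn_S Suc])
  then show ?case by simp
qed

lemma recfn_Suc: "recfn k g \<Longrightarrow> recfn k (\<lambda>xs. Suc (g xs))"
  by (drule recfn_Cn1[OF recfn_S]) simp

lemma computable_id: "computable_nat (\<lambda>x. x)"
  unfolding computable_nat_iff_recfn
  by (rule recfn_cong[OF recfn_proj[of 0]]) (auto simp: hd_conv_nth_0)

lemma computable_natI_recfn: "recfn 1 (\<lambda>xs. f (xs!0)) \<Longrightarrow> computable_nat f"
  unfolding computable_nat_iff_recfn by (erule recfn_cong) (simp add: hd_conv_nth_0)

lemma computable2_rec_nat: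
  assumes "computable_nat a" "computable3 St"
  shows "computable2 (\<lambda>n x. rec_nat (a x) (\<lambda>m y. St m y x) n)"
proof -
  have f: "recfn 1 (\<lambda>xs. a (xs!0))" using assms(1) unfolding computable_nat_iff_recfn
    by (rule recfn_cong) (metis length_Suc_0_conv_hd One_nat_def nth_Cons_0)
  have g: "recfn 3 (\<lambda>xs. St (xs!0) (xs!1) (xs!2))" using assms(2) unfolding computable3_def .
  have "recfn 2 (\<lambda>xs. rec_nat (a (tl xs ! 0)) (\<lambda>n y. St ((n # y # tl xs)!0) ((n # y # tl xs)!1)
      ((n # y # tl xs)!2)) (hd xs))"
    using recfn_Pr[OF f, of "\<lambda>xs. St (xs!0) (xs!1) (xs!2)"] g by (simp add: small_numerals_nat)
  then show ?thesis unfolding computable2_def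
    by (rule recfn_cong) (auto simp: hd_conv_nth_0 nth_tl)
qed

lemma computable_rec_nat_const:
  assumes "recfn 2 g"
  shows "computable_nat (\<lambda>n. rec_nat c (\<lambda>m y. g [m, y]) n)"
proof -
  have "recfn 1 (\<lambda>xs. rec_nat ((\<lambda>_. c) (tl xs)) (\<lambda>n y. g (n # y # tl xs)) (hd xs))"
    using recfn_Pr[OF recfn_const[of 0 c], of g] assms by (simp add: numeral_2_eq_2)
  then show ?thesis unfolding computable_nat_iff_recfn
    by (rule recfn_cong) (metis length_Suc_0_conv_hd One_nat_def list.sel(3))
qed

lemma computable_minus_one: "computable_nat (\<lambda>n. n - 1)"
proof -
  have "computable_nat (\<lambda>n. rec_nat 0 (\<lambda>m y. [m, y] ! 0) n)"
    by (rule computable_rec_nat_const) (rule recfn_proj, simp)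
  moreover have "rec_nat 0 (\<lambda>m y. [m, y] ! 0) n = n - 1" for n :: nat by (cases n) auto
  ultimately show ?thesis by simp
qed

lemma computable2I: "recfn 2 (\<lambda>xs. F (xs!0) (xs!1)) \<Longrightarrow> computable2 F" unfolding computable2_def .
lemma computable3I:
  "recfn 3 (\<lambda>xs. F (xs!0) (xs!1) (xs!2)) \<Longrightarrow> computable3 F" unfolding computable3_def .

lemma rec_nat_Suc_eq_add: "rec_nat x (\<lambda>m y. Suc y) n = n + x" by (induction n) auto
lemma rec_nat_add_eq_mult: "rec_nat 0 (\<lambda>m y. y + x) n = n * x" by (induction n) auto
lemma rec_nat_diff_eq_diff: "rec_nat x (\<lambda>m y. y - Suc 0) n = x - n" by (induction n) auto

lemma computable2_add: "computable2 (\<lambda>a b. a + b)"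
proof -
  have "computable2 (\<lambda>n x. rec_nat ((\<lambda>x. x) x) (\<lambda>m y. (\<lambda>m y x. Suc y) m y x) n)"
    by (intro computable2_rec_nat computable_id computable3I recfn_Suc recfn_proj) simp
  then show ?thesis by (simp add: rec_nat_Suc_eq_add)
qed

lemma computable2_mult: "computable2 (\<lambda>a b. a * b)"
proof -
  have "computable2 (\<lambda>n x. rec_nat ((\<lambda>x. 0) x) (\<lambda>m y. (\<lambda>m y x. y + x) m y x) n)"
    by (intro computable2_rec_nat computable3I recfn_comp2[OF computable2_add] recfn_proj)
       (auto simp: computable_nat_iff_recfn intro: recfn_const)
  then show ?thesis by (simp add: rec_nat_add_eq_mult)
qed

lemma computable2_swap: assumes "computable2 F" shows "computable2 (\<lambda>a b. F b a)"
  unfolding computable2_def by (rule recfn_comp2[OF assms]) (auto intro: recfn_proj)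

lemma computable2_diff: "computable2 (\<lambda>a b. a - b)"
proof -
  have "computable2 (\<lambda>n x. rec_nat ((\<lambda>x. x) x) (\<lambda>m y. (\<lambda>m y x. y - 1) m y x) n)"
    by (intro computable2_rec_nat computable_id computable3I recfn_comp1[OF computable_minus_one]
        recfn_proj) simp
  then have "computable2 (\<lambda>n x. x - n)" by (simp add: rec_nat_diff_eq_diff)
  then have "computable2 (\<lambda>a b. (\<lambda>n x. x - n) b a)" by (rule computable2_swap)
  then show ?thesis by simp
qed

lemma computable_triangle: "computable_nat triangle"
proof -
  have "computable_nat (\<lambda>n. rec_nat 0 (\<lambda>m y. [m, y] ! 1 + Suc ([m, y] ! 0)) n)"
    by (intro computable_rec_nat_const recfn_comp2[OF computable2_add] recfn_Suc recfn_proj) auto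
  moreover have "rec_nat 0 (\<lambda>m y. [m, y] ! 1 + Suc ([m, y] ! 0)) n = triangle n" for n
    by (induction n) auto
  ultimately show ?thesis by simp
qed

lemma prod_encode_eq_triangle: "prod_encode (a, b) = triangle (a + b) + a"
  by (simp add: prod_encode_def)

lemma computable2_prod_encode: "computable2 (\<lambda>a b. prod_encode (a, b))"
proof -
  have "computable2 (\<lambda>a b. triangle (a + b) + a)"
    by (intro computable2I recfn_comp2[OF computable2_add] recfn_comp1[OF computable_triangle]
        recfn_proj) auto
  then show ?thesis by (simp add: prod_encode_eq_triangle)
qed

lemma computable2_Least:
  assumes "computable2 F" "\<And>x. \<exists>i. F i x = 0"
  shows "computable_nat (\<lambda>x. LEAST i. F i x = 0)"
proof -
  have "recfn 1 (\<lambda>xs. LEAST n. F ((n # xs)!0) ((n # xs)!1) = 0)"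
    by (rule recfn_Mn) (use assms in \<open>auto simp: computable2_def small_numerals_nat\<close>)
  then show ?thesis by (rule computable_natI_recfn[OF recfn_cong]) auto
qed

lemma prod_decode_least:
  "prod_decode p =
    (let s = (LEAST s. p < triangle (Suc s)) in (p - triangle s, s - (p - triangle s)))"
proof -
  define s where "s = (LEAST s. p < triangle (Suc s))"
  have ex: "p < triangle (Suc p)" by (induction p) auto
  have s1: "p < triangle (Suc s)" unfolding s_def using ex by (rule LeastI)
  have s2: "triangle s \<le> p"
  proof (cases s)
    case (Suc s')
    then have "\<not> p < triangle (Suc s')" unfolding s_def by (metis Suc lessI not_less_Least s_def)
    then show ?thesis using Suc by simp
  qed simp
  define a where "a = p - triangle s"
  have "a \<le> s" using s1 s2 unfolding a_def by simp
  then have "prod_encode (a, s - a) = p" unfolding prod_encode_def a_def using s2 by simp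
  then have "prod_decode p = (a, s - a)" by (metis prod_encode_inverse)
  then show ?thesis unfolding Let_def s_def[symmetric] a_def .
qed

lemma computable_fst_decode: "computable_nat pfst" and computable_snd_decode: "computable_nat psnd"
proof -
  have c1: "computable2 (\<lambda>s p. 1 - (triangle (Suc s) - p))"
    by (intro computable2I recfn_comp2[OF computable2_diff] recfn_comp1[OF computable_triangle]
        recfn_Suc
        recfn_proj recfn_const) auto
  have "computable_nat (\<lambda>p. LEAST s. 1 - (triangle (Suc s) - p) = 0)"
  proof (rule computable2_Least[OF c1])
    fix p :: nat
    have "p < triangle (Suc p)" by (induction p) auto
    then show "\<exists>i. 1 - (triangle (Suc i) - p) = 0" by (intro exI[of _ p]) simp
  qed
  moreover have "(LEAST s. 1 - (triangle (Suc s) - p) = 0) = (LEAST s. p < triangle (Suc s))" for p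
    by (rule arg_cong[where f = Least]) (rule ext, linarith)
  ultimately have L: "computable_nat (\<lambda>p. LEAST s. p < triangle (Suc s))" by simp
  have "computable_nat (\<lambda>p. p - triangle (LEAST s. p < triangle (Suc s)))"
    unfolding computable_nat_iff_recfn
    by (intro recfn_comp2[OF computable2_diff] recfn_comp1[OF computable_triangle] recfn_comp1[OF L]
        recfn_cong[OF recfn_proj[of 0]]) (auto simp: hd_conv_nth_0)
  then show "computable_nat pfst" by (simp add: prod_decode_least Let_def)
  have "computable_nat (\<lambda>p. (LEAST s. p < triangle (Suc s))
      - (p - triangle (LEAST s. p < triangle (Suc s))))"
    unfolding computable_nat_iff_recfn
    by (intro recfn_comp2[OF computable2_diff] recfn_comp1[OF computable_triangle] recfn_comp1[OF L]
        recfn_cong[OF recfn_proj[of 0]]) (auto simp: hd_conv_nth_0)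
  then show "computable_nat psnd" by (simp add: prod_decode_least Let_def)
qed

lemma computable_comp: "computable_nat f \<Longrightarrow> computable_nat g \<Longrightarrow> computable_nat (\<lambda>x. f (g x))"
  unfolding computable_nat_iff_recfn by (rule recfn_comp1[unfolded computable_nat_iff_recfn])

lemma computable_comp2:
  "computable2 F \<Longrightarrow> computable_nat f \<Longrightarrow> computable_nat g \<Longrightarrow> computable_nat (\<lambda>x. F (f x) (g x))"
  unfolding computable_nat_iff_recfn by (rule recfn_comp2)

lemma computable_const: "computable_nat (\<lambda>x. c)"
  unfolding computable_nat_iff_recfn by (rule recfn_const)

lemma computable_Suc: "computable_nat f \<Longrightarrow> computable_nat (\<lambda>x. Suc (f x))"
  unfolding computable_nat_iff_recfn by (rule recfn_Suc)

lemma computable_add: "computable_nat f \<Longrightarrow> computable_nat g \<Longrightarrow> computable_nat (\<lambda>x. f x + g x)"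
  by (rule computable_comp2[OF computable2_add])
lemma computable_mult: "computable_nat f \<Longrightarrow> computable_nat g \<Longrightarrow> computable_nat (\<lambda>x. f x * g x)"
  by (rule computable_comp2[OF computable2_mult])
lemma computable_diff: "computable_nat f \<Longrightarrow> computable_nat g \<Longrightarrow> computable_nat (\<lambda>x. f x - g x)"
  by (rule computable_comp2[OF computable2_diff])
lemma computable_prod_encode:
  "computable_nat f \<Longrightarrow> computable_nat g \<Longrightarrow> computable_nat (\<lambda>x. prod_encode (f x, g x))"
  by (rule computable_comp2[OF computable2_prod_encode])
lemma computable_pfst: "computable_nat f \<Longrightarrow> computable_nat (\<lambda>x. pfst (f x))"
  by (rule computable_comp[OF computable_fst_decode])
lemma computable_psnd: "computable_nat f \<Longrightarrow> computable_nat (\<lambda>x. psnd (f x))"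
  by (rule computable_comp[OF computable_snd_decode])

lemma computable_comp_pair:
  assumes "computable_nat (\<lambda>p. F (pfst p) (psnd p))" "computable_nat h1" "computable_nat h2"
  shows "computable_nat (\<lambda>x. F (h1 x) (h2 x))"
proof -
  have "computable_nat (\<lambda>x. (\<lambda>p. F (pfst p) (psnd p)) (prod_encode (h1 x, h2 x)))"
    by (rule computable_comp[OF assms(1) computable_prod_encode[OF assms(2,3)]])
  then show ?thesis by simp
qed

lemma computable2_of_pair: "computable_nat (\<lambda>p. F (pfst p) (psnd p)) \<Longrightarrow> computable2 F"
  unfolding computable2_def computable_nat_iff_recfn
  by (drule recfn_comp1[unfolded computable_nat_iff_recfn, OF _ recfn_comp2[OF
      computable2_prod_encode recfn_proj recfn_proj, of 0 2 1]])
     (auto simp: small_numerals_nat)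

lemma computable3_of_pair:
  assumes "computable_nat (\<lambda>q. F (pfst q) (pfst (psnd q)) (psnd (psnd q)))"
  shows "computable3 F"
proof -
  have "recfn 3 (\<lambda>xs. (\<lambda>q. F (pfst q) (pfst (psnd q)) (psnd (psnd q)))
           (prod_encode (xs!0, prod_encode (xs!1, xs!2))))"
    by (intro recfn_comp1[OF assms] recfn_comp2[OF computable2_prod_encode] recfn_proj) auto
  then show ?thesis unfolding computable3_def by simp
qed

lemma computable_rec_nat:
  assumes "computable_nat n" "computable_nat a" "computable_nat (\<lambda>q. St (pfst q) (pfst (psnd q))
      (psnd (psnd q)))"
  shows "computable_nat (\<lambda>x. rec_nat (a x) (\<lambda>m y. St m y x) (n x))"
  using computable_comp2[OF computable2_rec_nat[OF assms(2)
      computable3_of_pair[OF assms(3)]] assms(1) computable_id] .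

lemma computable_Least_zero:
  assumes "computable_nat (\<lambda>p. F (pfst p) (psnd p))" "\<And>x. \<exists>i. F i x = 0"
  shows "computable_nat (\<lambda>x. LEAST i. F i x = 0)"
  by (rule computable2_Least[OF computable2_of_pair[OF assms(1)] assms(2)])

definition computable_pred :: "(nat \<Rightarrow> bool) \<Rightarrow> bool" where
  "computable_pred P \<longleftrightarrow> computable_nat (\<lambda>x. of_bool (P x))"

lemma computable_of_bool: "computable_pred P \<Longrightarrow> computable_nat (\<lambda>x. of_bool (P x))"
  unfolding computable_pred_def .

lemma computable_pred_const: "computable_pred (\<lambda>x. Q)"
  unfolding computable_pred_def by (rule computable_const)

lemma computable_pred_less: "computable_nat f \<Longrightarrow> computable_nat g \<Longrightarrow> computable_pred (\<lambda>x. f x < g x)"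
proof -
  assume "computable_nat f" "computable_nat g"
  then have "computable_nat (\<lambda>x. 1 - (1 - (g x - f x)))" by (intro computable_diff computable_const)
  moreover have "(1::nat) - (1 - (b - a)) = of_bool (a < b)" for a b :: nat by auto
  ultimately show ?thesis unfolding computable_pred_def by simp
qed

lemma computable_pred_not: "computable_pred P \<Longrightarrow> computable_pred (\<lambda>x. \<not> P x)"
proof -
  assume "computable_pred P"
  then have "computable_nat (\<lambda>x. 1 - of_bool (P x))" unfolding computable_pred_def
    by (intro computable_diff computable_const)
  moreover have "(1::nat) - of_bool Q = of_bool (\<not> Q)" for Q by auto
  ultimately show ?thesis unfolding computable_pred_def by simp
qed

lemma computable_pred_conj:
  "computable_pred P \<Longrightarrow> computable_pred Q \<Longrightarrow> computable_pred (\<lambda>x. P x \<and> Q x)"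
proof -
  assume "computable_pred P" "computable_pred Q"
  then have "computable_nat (\<lambda>x. of_bool (P x) * of_bool (Q x))" unfolding computable_pred_def
    by (intro computable_mult)
  then show ?thesis unfolding computable_pred_def by (simp add: of_bool_conj)
qed

lemma computable_pred_disj:
  "computable_pred P \<Longrightarrow> computable_pred Q \<Longrightarrow> computable_pred (\<lambda>x. P x \<or> Q x)"
proof -
  assume "computable_pred P" "computable_pred Q"
  then have "computable_pred (\<lambda>x. \<not> (\<not> P x \<and> \<not> Q x))"
    by (intro computable_pred_not computable_pred_conj)
  then show ?thesis by simp
qed

lemma computable_pred_imp: "computable_pred P \<Longrightarrow> computable_pred Q \<Longrightarrow> computable_pred (\<lambda>x. P x \<longrightarrow> Q x)"
proof -
  assume "computable_pred P" "computable_pred Q"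
  then have "computable_pred (\<lambda>x. \<not> P x \<or> Q x)" by (intro computable_pred_not computable_pred_disj)
  then show ?thesis by simp
qed

lemma computable_pred_le: "computable_nat f \<Longrightarrow> computable_nat g \<Longrightarrow> computable_pred (\<lambda>x. f x \<le> g x)"
proof -
  assume "computable_nat f" "computable_nat g"
  then have "computable_pred (\<lambda>x. f x < Suc (g x))" by (intro computable_pred_less computable_Suc)
  then show ?thesis by (simp add: less_Suc_eq_le)
qed

lemma computable_pred_eq: "computable_nat f \<Longrightarrow> computable_nat g \<Longrightarrow> computable_pred (\<lambda>x. f x = g x)"
proof -
  assume "computable_nat f" "computable_nat g"
  then have "computable_pred (\<lambda>x. f x \<le> g x \<and> g x \<le> f x)"
    by (intro computable_pred_conj computable_pred_le)
  then show ?thesis by (simp add: eq_iff)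
qed

lemma computable_pred_neq: "computable_nat f \<Longrightarrow> computable_nat g \<Longrightarrow> computable_pred (\<lambda>x. f x \<noteq> g x)"
  by (intro computable_pred_not computable_pred_eq)

lemma computable_If:
  "computable_pred P \<Longrightarrow> computable_nat f \<Longrightarrow> computable_nat g \<Longrightarrow>
   computable_nat (\<lambda>x. if P x then f x else g x)"
proof -
  assume "computable_pred P" "computable_nat f" "computable_nat g"
  then have "computable_nat (\<lambda>x. of_bool (P x) * f x + (1 - of_bool (P x)) * g x)"
    unfolding computable_pred_def
    by (intro computable_add computable_mult computable_diff computable_const)
  moreover have "(\<lambda>x. if P x then f x else g x) = (\<lambda>x. of_bool (P x) * f x +
      (1 - of_bool (P x)) * g x)"
    by (rule ext) simp
  ultimately show ?thesis by simp
qed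

lemma rec_nat_add_eq_sum: "rec_nat 0 (\<lambda>m y. y + F m) n = (\<Sum>i<n. F i)"
  by (induction n) auto

lemma computable_sum:
  assumes "computable_nat n" "computable_nat (\<lambda>p. F (pfst p) (psnd p))"
  shows "computable_nat (\<lambda>x. \<Sum>i<n x. F i x)"
proof -
  have "computable_nat (\<lambda>q. pfst (psnd q) + F (pfst q) (psnd (psnd q)))"
    by (intro computable_add computable_pfst computable_psnd computable_id computable_comp_pair[OF
        assms(2)])
  then have "computable_nat (\<lambda>x. rec_nat (0) (\<lambda>m y. y + F m x) (n x))"
    by (intro computable_rec_nat[OF assms(1) computable_const, where St = "\<lambda>m y x. y + F m x"]) simp
  then show ?thesis by (simp add: rec_nat_add_eq_sum)
qed

lemma computable_pred_bounded_all:
  assumes "computable_nat n" "computable_pred (\<lambda>p. P (pfst p) (psnd p))"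
  shows "computable_pred (\<lambda>x. \<forall>i<n x. P i x)"
proof -
  have "computable_pred (\<lambda>x. (\<Sum>i<n x. 1 - of_bool (P i x)) = (0::nat))"
    by (intro computable_pred_eq computable_sum computable_diff computable_const
        computable_of_bool assms)
  moreover have "((\<Sum>i<m. (1::nat) - of_bool (Q i)) = 0) = (\<forall>i<m. Q i)" for m :: nat and Q
    by (induction m) (auto simp: less_Suc_eq)
  ultimately show ?thesis by simp
qed

lemma computable_pred_bounded_ex:
  assumes "computable_nat n" "computable_pred (\<lambda>p. P (pfst p) (psnd p))"
  shows "computable_pred (\<lambda>x. \<exists>i<n x. P i x)"
proof -
  have "computable_pred (\<lambda>x. \<not> (\<forall>i<n x. \<not> P i x))"
    by (intro computable_pred_not computable_pred_bounded_all assms)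
  then show ?thesis by simp
qed

lemma computable_Least:
  assumes "computable_pred (\<lambda>p. P (pfst p) (psnd p))" "\<And>x. \<exists>i. P i x"
  shows "computable_nat (\<lambda>x. LEAST i. P i x)"
proof -
  have "computable_nat (\<lambda>x. LEAST i. (1::nat) - of_bool (P i x) = 0)"
    by (rule computable_Least_zero)
        (use assms in \<open>auto simp: computable_pred_def intro!: computable_diff computable_const\<close>)
  moreover have "(LEAST i. (1::nat) - of_bool (P i x) = 0) = (LEAST i. P i x)" for x
    by (rule arg_cong[where f = Least]) auto
  ultimately show ?thesis by simp
qed

lemma computable_power: "computable_nat f \<Longrightarrow> computable_nat g \<Longrightarrow> computable_nat (\<lambda>x. f x ^ g x)"
proof -
  assume f: "computable_nat f" and g: "computable_nat g"
  have s: "computable_nat (\<lambda>q. pfst (psnd q) * f (psnd (psnd q)))"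
    by (intro computable_mult computable_pfst computable_psnd computable_id computable_comp[OF f])
  have "computable_nat (\<lambda>x. rec_nat 1 (\<lambda>m y. y * f x) (g x))"
    using computable_rec_nat[where St = "\<lambda>m y x. y * f x", OF g computable_const] s by simp
  moreover have "rec_nat 1 (\<lambda>m y. y * a) n = a ^ n" for a n :: nat
    by (induction n) auto
  ultimately show ?thesis by simp
qed

lemma div_least: "(a::nat) div b = (LEAST q. b = 0 \<or> a < b * Suc q)"
proof (cases "b = 0")
  case False
  have lt: "a < b * Suc (a div b)"
  proof -
    have "a mod b < b" using False by simp
    moreover have "b * Suc (a div b) = b * (a div b) + b" by simp
    ultimately show ?thesis using mult_div_mod_eq[of b a] by linarith
  qed
  show ?thesis
  proof (rule Least_equality[symmetric])
    show "b = 0 \<or> a < b * Suc (a div b)" using lt by simp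
    fix y assume "b = 0 \<or> a < b * Suc y"
    then have "a < b * Suc y" using False by simp
    then show "a div b \<le> y" using False
      by (metis less_Suc_eq_le less_mult_imp_div_less mult.commute)
  qed
qed simp

lemma computable_div: "computable_nat f \<Longrightarrow> computable_nat g \<Longrightarrow> computable_nat (\<lambda>x. f x div g x)"
proof -
  assume f: "computable_nat f" and g: "computable_nat g"
  have "computable_nat (\<lambda>x. LEAST q. g x = 0 \<or> f x < g x * Suc q)"
  proof (rule computable_Least[where P = "\<lambda>q x. g x = 0 \<or> f x < g x * Suc q"])
    show "computable_pred (\<lambda>p. g (psnd p) = 0 \<or> f (psnd p) < g (psnd p) * Suc (pfst p))"
      by (intro computable_pred_disj computable_pred_eq computable_pred_less computable_mult
          computable_Suc computable_pfst computable_psnd computable_id computable_const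
          computable_comp[OF f] computable_comp[OF g])
    fix x show "\<exists>i. g x = 0 \<or> f x < g x * Suc i"
    proof (cases "g x = 0")
      case False
      have "f x mod g x < g x" using False by simp
      moreover have "g x * Suc (f x div g x) = g x * (f x div g x) + g x" by simp
      ultimately have "f x < g x * Suc (f x div g x)" using mult_div_mod_eq[of "g x" "f x"]
        by linarith
      then show ?thesis by blast
    qed simp
  qed
  then show ?thesis by (simp add: div_least)
qed

lemma computable_mod: "computable_nat f \<Longrightarrow> computable_nat g \<Longrightarrow> computable_nat (\<lambda>x. f x mod g x)"
proof -
  assume "computable_nat f" "computable_nat g"
  then have "computable_nat (\<lambda>x. f x - g x * (f x div g x))"
    by (intro computable_diff computable_mult computable_div)
  then show ?thesis by (simp add: minus_mult_div_eq_mod)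
qed

lemma computable_pred_even: "computable_nat f \<Longrightarrow> computable_pred (\<lambda>x. even (f x))"
proof -
  assume "computable_nat f"
  then have "computable_pred (\<lambda>x. f x mod 2 = 0)"
    by (intro computable_pred_eq computable_mod computable_const)
  then show ?thesis by (simp add: even_iff_mod_2_eq_zero)
qed

lemmas computable_intros =
  computable_const computable_id computable_Suc computable_add computable_mult computable_diff
  computable_power computable_div computable_mod computable_prod_encode computable_pfst
  computable_psnd computable_of_bool computable_If
  computable_pred_const computable_pred_less computable_pred_le computable_pred_eq
  computable_pred_neq computable_pred_not computable_pred_conj computable_pred_disj
  computable_pred_imp computable_pred_even computable_pred_bounded_all computable_pred_bounded_ex

lemma computable_comp_triple:
  assumes "computable_nat (\<lambda>q. F (pfst q) (pfst (psnd q)) (psnd (psnd q)))" "computable_nat h1"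
      "computable_nat h2" "computable_nat h3"
  shows "computable_nat (\<lambda>x. F (h1 x) (h2 x) (h3 x))"
proof -
  have "computable_nat (\<lambda>x. (\<lambda>q. F (pfst q) (pfst (psnd q)) (psnd (psnd q)))
      (prod_encode (h1 x, prod_encode (h2 x, h3 x))))"
    by (rule computable_comp[OF assms(1)]) (intro computable_prod_encode assms(2-4))
  then show ?thesis by simp
qed

lemma computable_pred_comp_triple:
  assumes "computable_pred (\<lambda>q. P (pfst q) (pfst (psnd q)) (psnd (psnd q)))" "computable_nat h1"
      "computable_nat h2" "computable_nat h3"
  shows "computable_pred (\<lambda>x. P (h1 x) (h2 x) (h3 x))"
  using computable_comp_triple[where F = "\<lambda>a b c. of_bool (P a b c)",
      OF assms[unfolded computable_pred_def]]
  unfolding computable_pred_def .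

lemma computable_pred_comp_pair:
  assumes "computable_pred (\<lambda>q. P (pfst q) (psnd q))" "computable_nat h1" "computable_nat h2"
  shows "computable_pred (\<lambda>x. P (h1 x) (h2 x))"
  using computable_comp_pair[where F = "\<lambda>a b. of_bool (P a b)",
      OF assms[unfolded computable_pred_def]]
  unfolding computable_pred_def .

section \<open>Bit strings and their codes\<close>

definition bits_of :: "nat \<Rightarrow> nat \<Rightarrow> bool list" where
  "bits_of L x = map (\<lambda>i. odd (x div 2 ^ i)) [0..<L]"

lemma length_bits_of[simp]: "length (bits_of L x) = L"
  by (simp add: bits_of_def)

lemma bits_of_nth: "i < L \<Longrightarrow> bits_of L x ! i = odd (x div 2 ^ i)"
  by (simp add: bits_of_def)

lemma bits_of_0[simp]: "bits_of 0 x = []" by (simp add: bits_of_def)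

lemma bits_of_Suc: "bits_of (Suc L) x = odd x # bits_of L (x div 2)"
proof (rule nth_equalityI)
  fix i assume "i < length (bits_of (Suc L) x)"
  then show "bits_of (Suc L) x ! i = (odd x # bits_of L (x div 2)) ! i"
    by (cases i) (auto simp: bits_of_nth div_mult2_eq power_Suc)
qed simp

lemma take_bits_of: "k \<le> L \<Longrightarrow> take k (bits_of L x) = bits_of k x"
  by (rule nth_equalityI) (auto simp: bits_of_nth)

lemma bits_of_inj: "x < 2 ^ L \<Longrightarrow> y < 2 ^ L \<Longrightarrow> bits_of L x = bits_of L y \<Longrightarrow> x = y"
proof (induction L arbitrary: x y)
  case 0 then show ?case by simp
next
  case (Suc L)
  have "x div 2 < 2 ^ L" "y div 2 < 2 ^ L" using Suc.prems by auto
  moreover have "bits_of L (x div 2) = bits_of L (y div 2)" "odd x = odd y"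
    using Suc.prems(3) by (auto simp: bits_of_Suc)
  ultimately have "x div 2 = y div 2" "odd x = odd y" using Suc.IH by auto
  then show ?case by (metis div_mult_mod_eq odd_iff_mod_2_eq_one mod2_eq_if)
qed

lemma bits_of_surj: "length \<rho> = L \<Longrightarrow> \<exists>x<2 ^ L. bits_of L x = \<rho>"
proof (induction \<rho> arbitrary: L)
  case Nil then show ?case by auto
next
  case (Cons a \<rho>)
  then obtain x where x: "x < 2 ^ length \<rho>" "bits_of (length \<rho>) x = \<rho>" by auto
  define y where "y = of_bool a + 2 * x"
  have "y div 2 = x" "odd y = a" unfolding y_def by auto
  moreover have "y < 2 ^ Suc (length \<rho>)" using x unfolding y_def by (cases a) auto
  ultimately show ?case using Cons.prems x by (auto simp: bits_of_Suc)
qed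

lemma bits_of_bij: "bij_betw (bits_of L) {..<2 ^ L} {\<rho>. length \<rho> = L}"
  unfolding bij_betw_def
proof
  show "inj_on (bits_of L) {..<2 ^ L}" unfolding inj_on_def using bits_of_inj by blast
  show "bits_of L ` {..<2 ^ L} = {\<rho>. length \<rho> = L}"
  proof (rule set_eqI, rule iffI)
    fix \<rho> assume "\<rho> \<in> bits_of L ` {..<2 ^ L}" then show "\<rho> \<in> {\<rho>. length \<rho> = L}" by auto
  next
    fix \<rho> :: "bool list" assume "\<rho> \<in> {\<rho>. length \<rho> = L}"
    then obtain x where "x < 2 ^ L" "bits_of L x = \<rho>" using bits_of_surj by auto
    then show "\<rho> \<in> bits_of L ` {..<2 ^ L}" by force
  qed
qed

text \<open>The code of a string is assembled from its last entry backwards, which makes it a primitive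
  recursion in the length.\<close>

definition code_bits_fun :: "nat \<Rightarrow> (nat \<Rightarrow> nat) \<Rightarrow> nat" where
  "code_bits_fun n F = rec_nat 0 (\<lambda>j y. Suc (prod_encode (F (n - Suc j), y))) n"

lemma code_str_Cons: "code_str (a # \<rho>) = Suc (prod_encode (of_bool a, code_str \<rho>))"
  by (simp add: code_str_def)

lemma code_bits_fun_rec:
  assumes "\<And>j. j < n \<Longrightarrow> F j \<le> 1" "j \<le> n"
  shows "rec_nat 0 (\<lambda>j y. Suc (prod_encode (F (n - Suc j), y))) j
         = code_str (map (\<lambda>i. F i = 1) [n - j..<n])"
  using assms(2)
proof (induction j)
  case 0 then show ?case by (simp add: code_str_def)
next
  case (Suc j)
  have e: "[n - Suc j..<n] = (n - Suc j) # [n - j..<n]"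
    using Suc.prems by (simp add: Suc_diff_Suc upt_conv_Cons)
  have "of_bool (F (n - Suc j) = 1) = F (n - Suc j)"
    using assms(1)[of "n - Suc j"] Suc.prems by (cases "F (n - Suc j)") auto
  then show ?case using Suc by (simp add: e code_str_Cons)
qed

lemma code_bits_fun_eq:
  "(\<And>j. j < n \<Longrightarrow> F j \<le> 1) \<Longrightarrow> code_bits_fun n F = code_str (map (\<lambda>j. F j = 1) [0..<n])"
  unfolding code_bits_fun_def using code_bits_fun_rec[of n F n] by simp

definition bits_code :: "nat \<Rightarrow> nat \<Rightarrow> nat" where
  "bits_code L x = code_bits_fun L (\<lambda>i. x div 2 ^ i mod 2)"

lemma bits_code_eq: "bits_code L x = code_str (bits_of L x)"
proof -
  have "bits_code L x = code_str (map (\<lambda>j. x div 2 ^ j mod 2 = 1) [0..<L])"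
    unfolding bits_code_def by (rule code_bits_fun_eq) simp
  also have "map (\<lambda>j. x div 2 ^ j mod 2 = 1) [0..<L] = bits_of L x"
    unfolding bits_of_def by (simp add: odd_iff_mod_2_eq_one)
  finally show ?thesis .
qed

lemma code_str_inject: "code_str \<rho> = code_str \<rho>' \<Longrightarrow> \<rho> = \<rho>'"
proof -
  assume "code_str \<rho> = code_str \<rho>'"
  then have "map (of_bool :: bool \<Rightarrow> nat) \<rho> = map of_bool \<rho>'" unfolding code_str_def
    by (simp add: list_encode_eq)
  moreover have "inj (of_bool :: bool \<Rightarrow> nat)"
    by (rule injI) (auto simp: of_bool_def split: if_splits)
  ultimately show ?thesis by (simp add: inj_map_eq_map)
qed

lemma computable_code_bits_fun:
  assumes "computable_nat n" "computable_nat (\<lambda>p. F (pfst p) (psnd p))"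
  shows "computable_nat (\<lambda>x. code_bits_fun (n x) (\<lambda>j. F j x))"
proof -
  have "computable_nat
      (\<lambda>q. Suc (prod_encode (F (n (psnd (psnd q)) - Suc (pfst q)) (psnd (psnd q)), pfst (psnd q))))"
    by (intro computable_intros computable_comp_pair[OF assms(2)] computable_comp[OF assms(1)])
  then have "computable_nat (\<lambda>x. rec_nat 0 (\<lambda>j y. Suc (prod_encode (F (n x - Suc j) x, y))) (n x))"
    using computable_rec_nat[where St = "\<lambda>j y x. Suc (prod_encode (F (n x - Suc j) x, y))",
        OF assms(1) computable_const]
    by simp
  then show ?thesis by (simp add: code_bits_fun_def)
qed

lemma computable_bits_code:
  "computable_nat f \<Longrightarrow> computable_nat g \<Longrightarrow> computable_nat (\<lambda>x. bits_code (f x) (g x))"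
proof -
  assume f: "computable_nat f" and g: "computable_nat g"
  have "computable_nat (\<lambda>x. code_bits_fun (f x) (\<lambda>i. g x div 2 ^ i mod 2))"
    by (rule computable_code_bits_fun[OF f, where F = "\<lambda>i x. g x div 2 ^ i mod 2"])
       (intro computable_intros computable_comp[OF g])
  then show ?thesis by (simp add: bits_code_def)
qed

lemma mu_UN_cyl_bits:
  assumes "A \<subseteq> {..<2 ^ L}"
  shows "mu (\<Union>x\<in>A. cyl (bits_of L x)) = card A / 2 ^ L"
proof -
  have inj: "inj_on (bits_of L) A" using bits_of_bij[of L] assms unfolding bij_betw_def
    by (auto intro: inj_on_subset)
  have fin: "finite A" using assms finite_subset by blast
  have "(\<Union>x\<in>A. cyl (bits_of L x)) = (\<Union>\<rho>\<in>bits_of L ` A. cyl \<rho>)" by simp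
  also have "mu \<dots> = card (bits_of L ` A) / 2 ^ L" by (rule mu_UN_cyl) (use fin in auto)
  also have "card (bits_of L ` A) = card A" using inj by (simp add: card_image)
  finally show ?thesis .
qed

lemma sets_UN_cyl_bits: "finite A \<Longrightarrow> (\<Union>x\<in>A. cyl (bits_of L x)) \<in> sets cantor"
  by (intro sets.finite_UN) auto

text \<open>The bound \<open>c \<le> s\<close> makes the search total; it does no harm since no string is longer than
  its code.\<close>

definition code_length :: "nat \<Rightarrow> nat" where
  "code_length c = (LEAST s. (\<exists>x<2 ^ s. bits_code s x = c) \<or> c \<le> s)"

definition is_code :: "nat \<Rightarrow> bool" where
  "is_code c \<longleftrightarrow> (\<exists>x<2 ^ code_length c. bits_code (code_length c) x = c)"

lemma length_le_code_str: "length \<rho> \<le> code_str \<rho>"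
proof (induction \<rho>)
  case (Cons a \<rho>)
  have "code_str \<rho> \<le> prod_encode (of_bool a, code_str \<rho>)" by (rule le_prod_encode_2)
  then show ?case using Cons.IH by (simp only: code_str_Cons length_Cons)
qed (simp add: code_str_def)

lemma code_length_code_str: "code_length (code_str \<sigma>) = length \<sigma>"
  unfolding code_length_def
proof (rule Least_equality)
  obtain x where "x < 2 ^ length \<sigma>" "bits_of (length \<sigma>) x = \<sigma>" using bits_of_surj by blast
  then show "(\<exists>x<2 ^ length \<sigma>. bits_code (length \<sigma>) x = code_str \<sigma>) \<or> code_str \<sigma> \<le> length \<sigma>"
    by (auto simp: bits_code_eq)
  fix s assume "(\<exists>x<2 ^ s. bits_code s x = code_str \<sigma>) \<or> code_str \<sigma> \<le> s"
  then show "length \<sigma> \<le> s"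
  proof
    assume "\<exists>x<2 ^ s. bits_code s x = code_str \<sigma>"
    then obtain x where "code_str (bits_of s x) = code_str \<sigma>" by (auto simp: bits_code_eq)
    then have "bits_of s x = \<sigma>" by (rule code_str_inject)
    then show ?thesis by auto
  next
    assume "code_str \<sigma> \<le> s" then show ?thesis using length_le_code_str[of \<sigma>] by simp
  qed
qed

lemma is_code_code_str: "is_code (code_str \<sigma>)"
  unfolding is_code_def code_length_code_str
  using bits_of_surj[of \<sigma>] by (auto simp: bits_code_eq)

lemma is_codeE: "is_code c \<Longrightarrow> \<exists>\<sigma>. c = code_str \<sigma>"
proof -
  assume "is_code c"
  then obtain x where "bits_code (code_length c) x = c" unfolding is_code_def by blast
  then have "c = code_str (bits_of (code_length c) x)" by (simp add: bits_code_eq)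
  then show ?thesis by blast
qed

lemma computable_code_length: "computable_nat f \<Longrightarrow> computable_nat (\<lambda>z. code_length (f z))"
proof -
  assume f: "computable_nat f"
  have "computable_nat code_length" unfolding code_length_def
  proof (rule computable_Least[where P = "\<lambda>s c. (\<exists>x<2 ^ s. bits_code s x = c) \<or> c \<le> s"])
    show "computable_pred (\<lambda>p. (\<exists>x<2 ^ pfst p. bits_code (pfst p) x = psnd p) \<or> psnd p \<le> pfst p)"
      by (intro computable_intros computable_bits_code)
  qed auto
  then show ?thesis using computable_comp f by blast
qed

lemma computable_pred_is_code: "computable_nat f \<Longrightarrow> computable_pred (\<lambda>z. is_code (f z))"
proof -
  assume f: "computable_nat f"
  have "computable_pred is_code" unfolding is_code_def
    by (intro computable_intros computable_bits_code computable_code_length)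
  then show ?thesis unfolding computable_pred_def using computable_comp f by blast
qed

section \<open>Compactness of Cantor space\<close>

lemma konig_path:
  fixes P :: "'a::finite list \<Rightarrow> bool"
  assumes pc: "\<And>xs ys. P (xs @ ys) \<Longrightarrow> P xs" and ex: "\<And>n. \<exists>xs. length xs = n \<and> P xs"
  shows "\<exists>X. \<forall>n. P (map X [0..<n])"
proof -
  \<comment> \<open>Having extensions in \<open>P\<close> of every length is inherited by some one-letter extension,
    as the alphabet is finite.\<close>
  define Q where "Q xs \<longleftrightarrow> (\<forall>m. \<exists>ys. length ys = m \<and> P (xs @ ys))" for xs
  have Q0: "Q []" using ex by (simp add: Q_def)
  have step: "\<exists>a. Q (xs @ [a])" if Qxs: "Q xs" for xs
  proof (rule ccontr)
    assume "\<not> (\<exists>a. Q (xs @ [a]))"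
    then have "\<forall>a. \<exists>m. \<forall>ys. length ys = m \<longrightarrow> \<not> P (xs @ [a] @ ys)" unfolding Q_def by auto
    then obtain mf where mf: "\<And>a ys. length ys = mf a \<Longrightarrow> \<not> P (xs @ [a] @ ys)" by metis
    define M where "M = Max (range mf)"
    have mM: "mf a \<le> M" for a unfolding M_def by (rule Max_ge) auto
    from Qxs obtain ys where ys: "length ys = Suc M" "P (xs @ ys)" unfolding Q_def by blast
    then obtain a ys' where ys': "ys = a # ys'" "length ys' = M" by (cases ys) auto
    have "xs @ ys = (xs @ [a] @ take (mf a) ys') @ drop (mf a) ys'" using ys' by simp
    then have "P (xs @ [a] @ take (mf a) ys')" using ys(2) pc by metis
    moreover have "length (take (mf a) ys') = mf a" using ys' mM[of a] by simp
    ultimately show False using mf by blast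
  qed
  define nxt where "nxt p = p @ [SOME a. Q (p @ [a])]" for p
  define path where "path n = (nxt ^^ n) []" for n
  have Qp: "Q (path n) \<and> length (path n) = n" for n
  proof (induction n)
    case 0 then show ?case using Q0 by (simp add: path_def)
  next
    case (Suc n)
    have "path (Suc n) = nxt (path n)" by (simp add: path_def)
    moreover have "Q (nxt (path n))" unfolding nxt_def using step[of "path n"] Suc
      by (metis someI_ex)
    ultimately show ?case using Suc by (simp add: nxt_def)
  qed
  define X where "X i = path (Suc i) ! i" for i
  have "map X [0..<n] = path n" for n
  proof (induction n)
    case 0 then show ?case using Qp[of 0] by simp
  next
    case (Suc n)
    have ps: "path (Suc n) = path n @ [SOME a. Q (path n @ [a])]" by (simp add: path_def nxt_def)
    have "X n = (SOME a. Q (path n @ [a]))" unfolding X_def ps using Qp[of n]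
      by (simp add: nth_append)
    then show ?case using Suc ps by simp
  qed
  then have "P (map X [0..<n])" for n using Qp[of n] unfolding Q_def
    by (metis append_Nil2 length_0_conv)
  then show ?thesis by blast
qed

definition prefix_continuous :: "((nat \<Rightarrow> bool) \<Rightarrow> (nat \<Rightarrow> bool)) \<Rightarrow> bool" where
  "prefix_continuous \<Phi> \<longleftrightarrow> (\<forall>X j. \<exists>k. \<forall>X'. init_seg X' k = init_seg X k \<longrightarrow> \<Phi> X' j = \<Phi> X j)"

lemma uniform_prefix_bound:
  fixes Q :: "'a::finite list \<Rightarrow> bool"
  assumes "\<And>X. \<exists>k. Q (map X [0..<k])"
  shows "\<exists>m. \<forall>xs. length xs = m \<longrightarrow> (\<exists>k\<le>m. Q (take k xs))"
proof (rule ccontr)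
  define B where "B xs \<longleftrightarrow> (\<forall>k\<le>length xs. \<not> Q (take k xs))" for xs
  assume "\<nexists>m. \<forall>xs. length xs = m \<longrightarrow> (\<exists>k\<le>m. Q (take k xs))"
  then have long: "\<exists>xs. length xs = m \<and> B xs" for m
    unfolding B_def by auto
  have prefix_closed: "B xs" if "B (xs @ ys)" for xs ys
    unfolding B_def
  proof (intro allI impI)
    fix k assume "k \<le> length xs"
    then have "take k (xs @ ys) = take k xs" by simp
    then show "\<not> Q (take k xs)"
      using that \<open>k \<le> length xs\<close> unfolding B_def by (metis le_add1 length_append order_trans)
  qed
  have "\<exists>X. \<forall>m. B (map X [0..<m])"
    by (rule konig_path) (fact prefix_closed, fact long)
  then obtain X where X: "\<And>m. B (map X [0..<m])" by blast
  obtain k where "Q (map X [0..<k])"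
    using assms by blast
  with X[of k] show False
    unfolding B_def by auto
qed

lemma prefix_continuous_eqI:
  assumes cont: "prefix_continuous \<Phi>"
    and approx: "\<And>m. \<exists>X' Y'. init_seg X' m = init_seg X m \<and> init_seg Y' m = init_seg Y m
                          \<and> init_seg (\<Phi> X') m = init_seg (\<Phi> Y') m"
  shows "\<Phi> X = \<Phi> Y"
proof
  fix j
  obtain k1 where k1: "\<And>X'. init_seg X' k1 = init_seg X k1 \<Longrightarrow> \<Phi> X' j = \<Phi> X j"
    using cont unfolding prefix_continuous_def by blast
  obtain k2 where k2: "\<And>Y'. init_seg Y' k2 = init_seg Y k2 \<Longrightarrow> \<Phi> Y' j = \<Phi> Y j"
    using cont unfolding prefix_continuous_def by blast
  define m where "m = k1 + k2 + Suc j"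
  obtain X' Y' where XY': "init_seg X' m = init_seg X m" "init_seg Y' m = init_seg Y m"
    "init_seg (\<Phi> X') m = init_seg (\<Phi> Y') m"
    using approx by blast
  have "\<Phi> X' j = \<Phi> X j"
    using XY'(1) by (intro k1) (rule init_seg_eq_mono, auto simp: m_def)
  moreover have "\<Phi> Y' j = \<Phi> Y j"
    using XY'(2) by (intro k2) (rule init_seg_eq_mono, auto simp: m_def)
  moreover have "\<Phi> X' j = \<Phi> Y' j"
    using XY'(3) by (rule init_seg_eq_nth) (simp add: m_def)
  ultimately show "\<Phi> X j = \<Phi> Y j" by simp
qed

lemma unseparated_pairs_accumulate:
  assumes "\<And>n. \<exists>X Y. X \<in> cyl \<sigma> \<and> Y \<notin> cyl \<sigma> \<and> init_seg (\<Phi> X) n = init_seg (\<Phi> Y) n"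
  obtains X Y where "X \<in> cyl \<sigma>" "Y \<notin> cyl \<sigma>"
    and "\<And>m. \<exists>X' Y'. init_seg X' m = init_seg X m \<and> init_seg Y' m = init_seg Y m
                     \<and> init_seg (\<Phi> X') m = init_seg (\<Phi> Y') m"
proof -
  define P where "P zs \<longleftrightarrow> (\<exists>X Y.
      map fst zs = init_seg X (length zs) \<and> map snd zs = init_seg Y (length zs)
      \<and> X \<in> cyl \<sigma> \<and> Y \<notin> cyl \<sigma> \<and> init_seg (\<Phi> X) (length zs) = init_seg (\<Phi> Y) (length zs))"
    for zs :: "(bool \<times> bool) list"
  have long: "\<exists>zs. length zs = n \<and> P zs" for n
  proof -
    obtain X Y where "X \<in> cyl \<sigma>" "Y \<notin> cyl \<sigma>" "init_seg (\<Phi> X) n = init_seg (\<Phi> Y) n"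
      using assms by blast
    moreover define zs where "zs = zip (init_seg X n) (init_seg Y n)"
    ultimately show ?thesis
      unfolding P_def by (intro exI[of _ zs] conjI) (auto simp: zs_def)
  qed
  have prefix_closed: "P xs" if "P (xs @ ys)" for xs ys
  proof -
    obtain X Y where XY: "map fst (xs @ ys) = init_seg X (length (xs @ ys))"
      "map snd (xs @ ys) = init_seg Y (length (xs @ ys))" "X \<in> cyl \<sigma>" "Y \<notin> cyl \<sigma>"
      "init_seg (\<Phi> X) (length (xs @ ys)) = init_seg (\<Phi> Y) (length (xs @ ys))"
      using \<open>P (xs @ ys)\<close> unfolding P_def by blast
    have "map fst xs = init_seg X (length xs)" "map snd xs = init_seg Y (length xs)"
      using arg_cong[OF XY(1), of "take (length xs)"] arg_cong[OF XY(2), of "take (length xs)"]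
      by (simp_all add: take_init_seg)
    moreover have "init_seg (\<Phi> X) (length xs) = init_seg (\<Phi> Y) (length xs)"
      using XY(5) by (rule init_seg_eq_mono) simp
    ultimately show "P xs" unfolding P_def using XY(3,4) by blast
  qed
  have "\<exists>Z. \<forall>m. P (map Z [0..<m])"
    by (rule konig_path) (fact prefix_closed, fact long)
  then obtain Z where Z: "\<And>m. P (map Z [0..<m])" by blast
  have witnesses: "\<exists>X' Y'.
      init_seg X' m = init_seg (fst \<circ> Z) m \<and> init_seg Y' m = init_seg (snd \<circ> Z) m
      \<and> X' \<in> cyl \<sigma> \<and> Y' \<notin> cyl \<sigma> \<and> init_seg (\<Phi> X') m = init_seg (\<Phi> Y') m" for m
  proof -
    have "map fst (map Z [0..<m]) = init_seg (fst \<circ> Z) m"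
      and "map snd (map Z [0..<m]) = init_seg (snd \<circ> Z) m"
      by (simp_all add: init_seg_map)
    moreover obtain X' Y' where "map fst (map Z [0..<m]) = init_seg X' m"
      "map snd (map Z [0..<m]) = init_seg Y' m" "X' \<in> cyl \<sigma>" "Y' \<notin> cyl \<sigma>"
      "init_seg (\<Phi> X') m = init_seg (\<Phi> Y') m"
      using Z[of m] unfolding P_def by auto
    ultimately show ?thesis by metis
  qed
  show thesis
  proof
    show "fst \<circ> Z \<in> cyl \<sigma>" "snd \<circ> Z \<notin> cyl \<sigma>"
      using witnesses[of "length \<sigma>"] unfolding mem_cyl_iff by metis+
    show "\<exists>X' Y'. init_seg X' m = init_seg (fst \<circ> Z) m \<and> init_seg Y' m = init_seg (snd \<circ> Z) m
                 \<and> init_seg (\<Phi> X') m = init_seg (\<Phi> Y') m" for m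
      using witnesses[of m] by blast
  qed
qed

lemma inj_prefix_continuous_separates_cyl:
  assumes "prefix_continuous \<Phi>" "inj \<Phi>"
  shows "\<exists>n. \<forall>X Y. X \<in> cyl \<sigma> \<longrightarrow> Y \<notin> cyl \<sigma> \<longrightarrow> init_seg (\<Phi> X) n \<noteq> init_seg (\<Phi> Y) n"
proof (rule ccontr)
  assume "\<nexists>n. \<forall>X Y. X \<in> cyl \<sigma> \<longrightarrow> Y \<notin> cyl \<sigma> \<longrightarrow> init_seg (\<Phi> X) n \<noteq> init_seg (\<Phi> Y) n"
  then obtain X Y where "X \<in> cyl \<sigma>" "Y \<notin> cyl \<sigma>"
    and "\<And>m. \<exists>X' Y'. init_seg X' m = init_seg X m \<and> init_seg Y' m = init_seg Y m
                     \<and> init_seg (\<Phi> X') m = init_seg (\<Phi> Y') m"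
    using unseparated_pairs_accumulate[of \<sigma> \<Phi>] by blast
  then have "\<Phi> X = \<Phi> Y"
    using prefix_continuous_eqI[OF assms(1)] by blast
  with \<open>inj \<Phi>\<close> \<open>X \<in> cyl \<sigma>\<close> \<open>Y \<notin> cyl \<sigma>\<close> show False
    by (metis injD)
qed

section \<open>A computable map of Cantor space\<close>

text \<open>
  The program \<open>h\<close> for \<open>\<Phi>\<close> is simulated on inputs \<open>x < 2\<^sup>L\<close>, read as the bit strings
  \<open>bits_of L x\<close>; an answer \<open>\<ge> 2\<close> means that the output bit is not yet known. The quantifiers in
  \<open>determines\<close> and \<open>separates\<close> thus range over finitely many inputs, which makes them decidable;
  \<open>separates\<close> is the decidable form of the separation property in \<open>separates_code_str_iff\<close>.
\<close>

definition halts_at :: "(nat \<Rightarrow> nat) \<Rightarrow> nat \<Rightarrow> nat \<Rightarrow> nat \<Rightarrow> bool" where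
  "halts_at h x k j \<longleftrightarrow> h (prod_encode (bits_code k x, j)) < 2"

definition determines :: "(nat \<Rightarrow> nat) \<Rightarrow> nat \<Rightarrow> nat \<Rightarrow> bool" where
  "determines h L n \<longleftrightarrow> (\<forall>x<2 ^ L. \<forall>j<n. \<exists>k<Suc L. halts_at h x k j)"

definition output_bit :: "(nat \<Rightarrow> nat) \<Rightarrow> nat \<Rightarrow> nat \<Rightarrow> nat \<Rightarrow> nat" where
  "output_bit h x L j = h (prod_encode (bits_code (LEAST k. halts_at h x k j \<or> L \<le> k) x, j))"

definition output_code :: "(nat \<Rightarrow> nat) \<Rightarrow> nat \<Rightarrow> nat \<Rightarrow> nat \<Rightarrow> nat" where
  "output_code h x L n = code_bits_fun n (\<lambda>j. output_bit h x L j)"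

definition input_depth :: "(nat \<Rightarrow> nat) \<Rightarrow> nat \<Rightarrow> nat \<Rightarrow> nat" where
  "input_depth h s n = s + (LEAST L. determines h (s + L) n)"

definition separates :: "(nat \<Rightarrow> nat) \<Rightarrow> nat \<Rightarrow> nat \<Rightarrow> nat \<Rightarrow> bool" where
  "separates h s c n \<longleftrightarrow> (\<forall>x<2 ^ input_depth h s n. \<forall>y<2 ^ input_depth h s n.
      bits_code s x = c \<and> bits_code s y \<noteq> c \<longrightarrow>
          output_code h x (input_depth h s n) n \<noteq> output_code h y (input_depth h s n) n)"

definition separation_depth :: "(nat \<Rightarrow> nat) \<Rightarrow> nat \<Rightarrow> nat" where
  "separation_depth h c = (LEAST n. \<not> is_code c \<or> separates h (code_length c) c n)"

definition code_input_depth :: "(nat \<Rightarrow> nat) \<Rightarrow> nat \<Rightarrow> nat" where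
  "code_input_depth h c = input_depth h (code_length c) (separation_depth h c)"

locale computable_cantor_map =
  fixes \<Phi> :: "(nat \<Rightarrow> bool) \<Rightarrow> (nat \<Rightarrow> bool)" and h :: "nat \<Rightarrow> nat"
  assumes computable: "computable_nat h"
    and answers: "\<And>X n. \<exists>k. h (prod_encode (code_str (init_seg X k), n)) < 2"
    and answers_correct: "\<And>X n k. h (prod_encode (code_str (init_seg X k), n)) < 2 \<Longrightarrow>
                h (prod_encode (code_str (init_seg X k), n)) = of_bool (\<Phi> X n)"
begin

lemma prefix_continuous: "prefix_continuous \<Phi>"
  unfolding prefix_continuous_def
proof (intro allI)
  fix X j
  obtain k where k: "h (prod_encode (code_str (init_seg X k), j)) < 2"
    using answers by blast
  have "\<Phi> X' j = \<Phi> X j" if "init_seg X' k = init_seg X k" for X'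
    using answers_correct[of X' k j] answers_correct[of X k j] k that by (simp add: of_bool_eq_iff)
  then show "\<exists>k. \<forall>X'. init_seg X' k = init_seg X k \<longrightarrow> \<Phi> X' j = \<Phi> X j" by blast
qed

lemma halts_at_iff:
  assumes "bits_of L x = init_seg X L" "k \<le> L"
  shows "halts_at h x k j \<longleftrightarrow> h (prod_encode (code_str (init_seg X k), j)) < 2"
proof -
  have "bits_of k x = init_seg X k" using assms by (metis take_init_seg take_bits_of)
  then show ?thesis by (simp add: halts_at_def bits_code_eq)
qed

lemma determines_iff: "determines h L n \<longleftrightarrow>
   (\<forall>X. \<forall>j<n. \<exists>k<Suc L. h (prod_encode (code_str (init_seg X k), j)) < 2)"
proof
  assume g: "determines h L n"
  show "\<forall>X. \<forall>j<n. \<exists>k<Suc L. h (prod_encode (code_str (init_seg X k), j)) < 2"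
  proof (intro allI impI)
    fix X j assume j: "j < n"
    obtain x where x: "x < 2 ^ L" "bits_of L x = init_seg X L"
      using bits_of_surj[of "init_seg X L" L] by auto
    then obtain k where "k < Suc L" "halts_at h x k j" using g j unfolding determines_def by blast
    then show "\<exists>k<Suc L. h (prod_encode (code_str (init_seg X k), j)) < 2"
      using halts_at_iff[OF x(2)] by auto
  qed
next
  assume a: "\<forall>X. \<forall>j<n. \<exists>k<Suc L. h (prod_encode (code_str (init_seg X k), j)) < 2"
  show "determines h L n" unfolding determines_def
  proof (intro allI impI)
    fix x :: nat and j assume "x < 2 ^ L" "j < n"
    have e: "bits_of L x = init_seg (zero_ext (bits_of L x)) L" by (simp add: init_seg_zero_ext)
    obtain k where "k < Suc L" "h (prod_encode (code_str (init_seg (zero_ext (bits_of L x))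
        k), j)) < 2"
      using a \<open>j < n\<close> by blast
    then show "\<exists>k<Suc L. halts_at h x k j" using halts_at_iff[OF e] by auto
  qed
qed

lemma ex_determines: "\<exists>L. determines h (s + L) n"
proof -
  have "\<exists>m. \<forall>\<rho>. length \<rho> = m \<longrightarrow> (\<exists>k\<le>m. h (prod_encode (code_str (take k \<rho>), j)) < 2)" for j
    using answers by (intro uniform_prefix_bound) (simp add: init_seg_def)
  then obtain m where m: "\<And>j \<rho>. length \<rho> = m j \<Longrightarrow>
      \<exists>k\<le>m j. h (prod_encode (code_str (take k \<rho>), j)) < 2"
    by metis
  define M where "M = (\<Sum>j<n. m j)"
  have "determines h (s + M) n" unfolding determines_iff
  proof (intro allI impI)
    fix X j assume j: "j < n"
    have "m j \<le> M" unfolding M_def using j by (intro member_le_sum) auto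
    obtain k where k: "k \<le> m j" "h (prod_encode (code_str (take k (init_seg X (m j))), j)) < 2"
      using m[of "init_seg X (m j)" j] by auto
    then have "h (prod_encode (code_str (init_seg X k), j)) < 2" by (simp add: take_init_seg)
    moreover have "k < Suc (s + M)" using k(1) \<open>m j \<le> M\<close> by simp
    ultimately show "\<exists>k<Suc (s + M). h (prod_encode (code_str (init_seg X k), j)) < 2" by blast
  qed
  then show ?thesis by blast
qed

lemma output_bit_eq:
  assumes g: "determines h L n" and x: "bits_of L x = init_seg X L" and j: "j < n"
  shows "output_bit h x L j = of_bool (\<Phi> X j)"
proof -
  define k0 where "k0 = (LEAST k. halts_at h x k j \<or> L \<le> k)"
  obtain k where k: "k < Suc L" "h (prod_encode (code_str (init_seg X k), j)) < 2"
    using g j unfolding determines_iff by blast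
  then have ok: "halts_at h x k j" using halts_at_iff[OF x] by simp
  have "k0 \<le> k" unfolding k0_def using ok by (intro Least_le) simp
  have "halts_at h x k0 j \<or> L \<le> k0" unfolding k0_def
    by (rule LeastI[where P = "\<lambda>k. halts_at h x k j \<or> L \<le> k" and k = k]) (simp add: ok)
  then have ok0: "halts_at h x k0 j" using \<open>k0 \<le> k\<close> k(1) ok
    by (metis le_antisym less_Suc_eq_le order_trans)
  have "k0 \<le> L" using \<open>k0 \<le> k\<close> k(1) by simp
  have sk: "bits_of k0 x = init_seg X k0" using x \<open>k0 \<le> L\<close> by (metis take_init_seg take_bits_of)
  have "h (prod_encode (code_str (init_seg X k0), j)) < 2" using ok0 halts_at_iff[OF x \<open>k0 \<le> L\<close>]
    by simp
  then have "h (prod_encode (code_str (init_seg X k0), j)) = of_bool (\<Phi> X j)"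
    by (rule answers_correct)
  then show ?thesis unfolding output_bit_def k0_def[symmetric] by (simp add: bits_code_eq sk)
qed

lemma determines_prefix:
  assumes g: "determines h L n" and "init_seg X L = init_seg Y L"
  shows "init_seg (\<Phi> X) n = init_seg (\<Phi> Y) n"
proof -
  obtain x where x: "bits_of L x = init_seg X L" using bits_of_surj[of "init_seg X L" L] by auto
  have "\<Phi> X j = \<Phi> Y j" if "j < n" for j
    using output_bit_eq[OF g x that] output_bit_eq[OF g x[unfolded assms(2)] that]
    by (simp add: of_bool_eq_iff)
  then show ?thesis by (simp add: init_seg_map)
qed

lemma output_code_eq:
  assumes g: "determines h L n" and x: "bits_of L x = init_seg X L"
  shows "output_code h x L n = code_str (init_seg (\<Phi> X) n)"
proof -
  have "output_code h x L n = code_str (map (\<lambda>j. output_bit h x L j = 1) [0..<n])"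
    unfolding output_code_def by (rule code_bits_fun_eq) (simp add: output_bit_eq[OF g x])
  also have "map (\<lambda>j. output_bit h x L j = 1) [0..<n] = init_seg (\<Phi> X) n"
    by (simp add: output_bit_eq[OF g x] init_seg_map)
  finally show ?thesis .
qed

lemma determines_input_depth:
  "determines h (input_depth h s n) n" and input_depth_ge: "s \<le> input_depth h s n"
proof -
  show "determines h (input_depth h s n) n" unfolding input_depth_def using ex_determines[of s n]
    by (rule LeastI_ex)
  show "s \<le> input_depth h s n" unfolding input_depth_def by simp
qed

lemma separates_code_str_iff:
  "separates h (length \<sigma>) (code_str \<sigma>) n \<longleftrightarrow>
     (\<forall>X Y. X \<in> cyl \<sigma> \<longrightarrow> Y \<notin> cyl \<sigma> \<longrightarrow> init_seg (\<Phi> X) n \<noteq> init_seg (\<Phi> Y) n)"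
proof -
  define L where "L = input_depth h (length \<sigma>) n"
  have determines: "determines h L n" and "length \<sigma> \<le> L"
    unfolding L_def by (rule determines_input_depth, rule input_depth_ge)
  then have extends_iff: "bits_code (length \<sigma>) x = code_str \<sigma> \<longleftrightarrow> X \<in> cyl \<sigma>"
    if "bits_of L x = init_seg X L" for x X
    using that by (metis bits_code_eq code_str_inject mem_cyl_iff take_bits_of take_init_seg)
  have "(\<forall>x<2 ^ L. \<forall>y<2 ^ L.
          bits_code (length \<sigma>) x = code_str \<sigma> \<and> bits_code (length \<sigma>) y \<noteq> code_str \<sigma>
          \<longrightarrow> output_code h x L n \<noteq> output_code h y L n)
      \<longleftrightarrow> (\<forall>X Y. X \<in> cyl \<sigma> \<longrightarrow> Y \<notin> cyl \<sigma> \<longrightarrow> init_seg (\<Phi> X) n \<noteq> init_seg (\<Phi> Y) n)"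
  proof (intro iffI allI impI)
    fix X Y assume sep: "\<forall>x<2 ^ L. \<forall>y<2 ^ L.
        bits_code (length \<sigma>) x = code_str \<sigma> \<and> bits_code (length \<sigma>) y \<noteq> code_str \<sigma>
        \<longrightarrow> output_code h x L n \<noteq> output_code h y L n"
      and "X \<in> cyl \<sigma>" "Y \<notin> cyl \<sigma>"
    obtain x y where "x < 2 ^ L" "bits_of L x = init_seg X L"
      and "y < 2 ^ L" "bits_of L y = init_seg Y L"
      using bits_of_surj[of "init_seg X L" L] bits_of_surj[of "init_seg Y L" L] by auto
    with sep \<open>X \<in> cyl \<sigma>\<close> \<open>Y \<notin> cyl \<sigma>\<close> show "init_seg (\<Phi> X) n \<noteq> init_seg (\<Phi> Y) n"
      using extends_iff output_code_eq[OF determines] by metis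
  next
    fix x y assume sep: "\<forall>X Y. X \<in> cyl \<sigma> \<longrightarrow> Y \<notin> cyl \<sigma> \<longrightarrow> init_seg (\<Phi> X) n \<noteq> init_seg (\<Phi> Y) n"
      and "x < 2 ^ L" "y < 2 ^ L"
      and "bits_code (length \<sigma>) x = code_str \<sigma> \<and> bits_code (length \<sigma>) y \<noteq> code_str \<sigma>"
    moreover have "bits_of L x = init_seg (zero_ext (bits_of L x)) L"
      and "bits_of L y = init_seg (zero_ext (bits_of L y)) L"
      by (simp_all add: init_seg_zero_ext)
    ultimately show "output_code h x L n \<noteq> output_code h y L n"
      using extends_iff output_code_eq[OF determines] by (metis code_str_inject)
  qed
  then show ?thesis unfolding separates_def L_def .
qed

definition input_codes :: "nat \<Rightarrow> bool list \<Rightarrow> bool list \<Rightarrow> nat set" where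
  "input_codes L \<sigma> \<tau> = {x. x < 2 ^ L \<and> bits_of (length \<sigma>) x = \<sigma>
      \<and> init_seg (\<Phi> (zero_ext (bits_of L x))) (length \<tau>) = \<tau>}"

lemma cyl_inter_preimage_eq:
  assumes determines: "determines h L (length \<tau>)" and "length \<sigma> \<le> L"
  shows "cyl \<sigma> \<inter> \<Phi> -` cyl \<tau> = (\<Union>x\<in>input_codes L \<sigma> \<tau>. cyl (bits_of L x))"
proof (rule set_eqI, rule iffI)
  fix X assume X: "X \<in> cyl \<sigma> \<inter> \<Phi> -` cyl \<tau>"
  obtain x where x: "x < 2 ^ L" "bits_of L x = init_seg X L"
    using bits_of_surj[of "init_seg X L" L] by auto
  have same_prefix: "init_seg (zero_ext (bits_of L x)) L = init_seg X L"
    using x by (simp add: init_seg_zero_ext)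
  have "init_seg (\<Phi> (zero_ext (bits_of L x))) (length \<tau>) = \<tau>"
    using determines_prefix[OF determines same_prefix] X by (simp add: mem_cyl_iff)
  moreover have "bits_of (length \<sigma>) x = \<sigma>"
    using X x(2) \<open>length \<sigma> \<le> L\<close> by (metis IntD1 mem_cyl_iff take_init_seg take_bits_of)
  moreover have "X \<in> cyl (bits_of L x)"
    using x by (simp add: mem_cyl_iff)
  ultimately show "X \<in> (\<Union>x\<in>input_codes L \<sigma> \<tau>. cyl (bits_of L x))"
    unfolding input_codes_def using x(1) by blast
next
  fix X assume "X \<in> (\<Union>x\<in>input_codes L \<sigma> \<tau>. cyl (bits_of L x))"
  then obtain x where x: "bits_of (length \<sigma>) x = \<sigma>" "X \<in> cyl (bits_of L x)"
    "init_seg (\<Phi> (zero_ext (bits_of L x))) (length \<tau>) = \<tau>"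
    unfolding input_codes_def by blast
  have XL: "init_seg X L = bits_of L x"
    using x(2) by (simp add: mem_cyl_iff)
  then have same_prefix: "init_seg (zero_ext (bits_of L x)) L = init_seg X L"
    by (simp add: init_seg_zero_ext)
  have "init_seg (\<Phi> X) (length \<tau>) = \<tau>"
    using determines_prefix[OF determines same_prefix] x(3) by simp
  moreover have "init_seg X (length \<sigma>) = \<sigma>"
    using XL x(1) \<open>length \<sigma> \<le> L\<close> by (metis take_init_seg take_bits_of)
  ultimately show "X \<in> cyl \<sigma> \<inter> \<Phi> -` cyl \<tau>"
    by (simp add: mem_cyl_iff)
qed

lemma preimage_cyl_sets: "\<Phi> -` cyl \<tau> \<in> sets cantor"
proof -
  obtain L where "determines h (0 + L) (length \<tau>)"
    using ex_determines by blast
  then have "\<Phi> -` cyl \<tau> = (\<Union>x\<in>input_codes L [] \<tau>. cyl (bits_of L x))"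
    using cyl_inter_preimage_eq[of L \<tau> "[]"] by simp
  moreover have "finite (input_codes L [] \<tau>)"
    unfolding input_codes_def by simp
  ultimately show ?thesis
    by (simp add: sets_UN_cyl_bits)
qed

lemma computable_pred_halts_at:
  "computable_nat f \<Longrightarrow> computable_nat g \<Longrightarrow> computable_nat u \<Longrightarrow>
   computable_pred (\<lambda>z. halts_at h (f z) (g z) (u z))"
proof -
  have "computable_pred (\<lambda>q. halts_at h (pfst q) (pfst (psnd q)) (psnd (psnd q)))"
    unfolding halts_at_def
    by (intro computable_intros computable_comp[OF computable] computable_bits_code)
  then show "computable_nat f \<Longrightarrow> computable_nat g \<Longrightarrow> computable_nat u \<Longrightarrow> ?thesis"
    by (rule computable_pred_comp_triple)
qed

lemma computable_pred_determines:
  "computable_nat f \<Longrightarrow> computable_nat g \<Longrightarrow> computable_pred (\<lambda>z. determines h (f z) (g z))"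
proof -
  have "computable_pred (\<lambda>q. determines h (pfst q) (psnd q))" unfolding determines_def
    by (intro computable_intros computable_pred_halts_at)
  then show "computable_nat f \<Longrightarrow> computable_nat g \<Longrightarrow> ?thesis" by (rule computable_pred_comp_pair)
qed

lemma computable_output_bit:
  "computable_nat f \<Longrightarrow> computable_nat g \<Longrightarrow> computable_nat u \<Longrightarrow>
   computable_nat (\<lambda>z. output_bit h (f z) (g z) (u z))"
proof -
  have L: "computable_nat (\<lambda>q. LEAST k. halts_at h (pfst q) k (psnd (psnd q)) \<or> pfst (psnd q) \<le> k)"
  proof (rule computable_Least[where P = "\<lambda>k q. halts_at h (pfst q) k (psnd (psnd q)) \<or>
      pfst (psnd q) \<le> k"])
    show "computable_pred (\<lambda>p. halts_at h (pfst (psnd p)) (pfst p) (psnd (psnd (psnd p))) \<or>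
        pfst (psnd (psnd p)) \<le> pfst p)"
      by (intro computable_intros computable_pred_halts_at)
  qed auto
  have "computable_nat (\<lambda>q. output_bit h (pfst q) (pfst (psnd q)) (psnd (psnd q)))"
    unfolding output_bit_def
    by (intro computable_intros computable_comp[OF computable] computable_bits_code L)
  then show "computable_nat f \<Longrightarrow> computable_nat g \<Longrightarrow> computable_nat u \<Longrightarrow> ?thesis"
    by (rule computable_comp_triple)
qed

lemma computable_output_code:
  "computable_nat f \<Longrightarrow> computable_nat g \<Longrightarrow> computable_nat u \<Longrightarrow>
   computable_nat (\<lambda>z. output_code h (f z) (g z) (u z))"
proof -
  have "computable_nat (\<lambda>q. output_code h (pfst q) (pfst (psnd q)) (psnd (psnd q)))"
    unfolding output_code_def
    by (rule computable_code_bits_fun[where F = "\<lambda>j q. output_bit h (pfst q) (pfst (psnd q)) j"])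
       (intro computable_intros computable_output_bit)+
  then show "computable_nat f \<Longrightarrow> computable_nat g \<Longrightarrow> computable_nat u \<Longrightarrow> ?thesis"
    by (rule computable_comp_triple)
qed

lemma computable_input_depth:
  "computable_nat f \<Longrightarrow> computable_nat g \<Longrightarrow> computable_nat (\<lambda>z. input_depth h (f z) (g z))"
proof -
  have L: "computable_nat (\<lambda>q. LEAST L. determines h (pfst q + L) (psnd q))"
  proof (rule computable_Least[where P = "\<lambda>L q. determines h (pfst q + L) (psnd q)"])
    show "computable_pred (\<lambda>p. determines h (pfst (psnd p) + pfst p) (psnd (psnd p)))"
      by (intro computable_intros computable_pred_determines)
  qed (rule ex_determines)
  have "computable_nat (\<lambda>q. input_depth h (pfst q) (psnd q))" unfolding input_depth_def
    by (intro computable_intros L)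
  then show "computable_nat f \<Longrightarrow> computable_nat g \<Longrightarrow> ?thesis" by (rule computable_comp_pair)
qed

lemma computable_pred_separates:
  "computable_nat f \<Longrightarrow> computable_nat g \<Longrightarrow> computable_nat u \<Longrightarrow>
   computable_pred (\<lambda>z. separates h (f z) (g z) (u z))"
proof -
  have "computable_pred (\<lambda>q. separates h (pfst q) (pfst (psnd q)) (psnd (psnd q)))"
    unfolding separates_def
    by (intro computable_intros computable_output_code computable_input_depth computable_bits_code)
  then show "computable_nat f \<Longrightarrow> computable_nat g \<Longrightarrow> computable_nat u \<Longrightarrow> ?thesis"
    by (rule computable_pred_comp_triple)
qed

end

section \<open>The limit martingale\<close>

locale injective_computable_cantor_map = computable_cantor_map +
  assumes inj: "inj \<Phi>"
begin

lemma ex_separates: "\<exists>n. \<not> is_code c \<or> separates h (code_length c) c n"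
proof (cases "is_code c")
  case True
  then obtain \<sigma> where "c = code_str \<sigma>" using is_codeE by blast
  moreover obtain n where "\<forall>X Y. X \<in> cyl \<sigma> \<longrightarrow> Y \<notin> cyl \<sigma> \<longrightarrow> init_seg (\<Phi> X) n \<noteq> init_seg (\<Phi> Y) n"
    using inj_prefix_continuous_separates_cyl[OF prefix_continuous inj] by blast
  ultimately show ?thesis by (auto simp: separates_code_str_iff code_length_code_str)
qed blast

text \<open>\<open>sep_depth \<sigma>\<close> is the output depth \<open>N(\<sigma>)\<close> that separates \<open>[\<sigma>]\<close> from its complement, and
  \<open>in_depth \<sigma>\<close> an input depth that determines that many output bits.\<close>

definition sep_depth :: "bool list \<Rightarrow> nat" where
  "sep_depth \<sigma> = separation_depth h (code_str \<sigma>)"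

definition in_depth :: "bool list \<Rightarrow> nat" where
  "in_depth \<sigma> = code_input_depth h (code_str \<sigma>)"

definition extensions :: "bool list \<Rightarrow> nat set" where
  "extensions \<sigma> = {x. x < 2 ^ in_depth \<sigma> \<and> bits_of (length \<sigma>) x = \<sigma>}"

definition image_prefix :: "bool list \<Rightarrow> nat \<Rightarrow> bool list" where
  "image_prefix \<sigma> x = init_seg (\<Phi> (zero_ext (bits_of (in_depth \<sigma>) x))) (sep_depth \<sigma>)"

lemma in_depth_eq: "in_depth \<sigma> = input_depth h (length \<sigma>) (sep_depth \<sigma>)"
  unfolding in_depth_def code_input_depth_def sep_depth_def code_length_code_str ..

lemma determines_in_depth: "determines h (in_depth \<sigma>) (sep_depth \<sigma>)"
  and in_depth_ge: "length \<sigma> \<le> in_depth \<sigma>"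
  unfolding in_depth_eq by (rule determines_input_depth, rule input_depth_ge)

lemma extensions_subset: "extensions \<sigma> \<subseteq> {..<2 ^ in_depth \<sigma>}"
  unfolding extensions_def by auto

lemma finite_extensions: "finite (extensions \<sigma>)"
  using extensions_subset finite_subset by blast

lemma separated_beyond_sep_depth:
  assumes "sep_depth \<sigma> \<le> m" "X \<in> cyl \<sigma>" "Y \<notin> cyl \<sigma>"
  shows "init_seg (\<Phi> X) m \<noteq> init_seg (\<Phi> Y) m"
proof -
  have "\<not> is_code (code_str \<sigma>) \<or> separates h (code_length (code_str \<sigma>)) (code_str \<sigma>) (sep_depth \<sigma>)"
    unfolding sep_depth_def separation_depth_def using ex_separates by (rule LeastI_ex)
  then have "separates h (length \<sigma>) (code_str \<sigma>) (sep_depth \<sigma>)"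
    using is_code_code_str by (simp add: code_length_code_str)
  then show ?thesis
    using assms unfolding separates_code_str_iff by (metis init_seg_eq_mono)
qed

lemma preimage_cyl_subset_or_disjoint:
  assumes "sep_depth \<sigma> \<le> length \<tau>"
  shows "\<Phi> -` cyl \<tau> \<subseteq> cyl \<sigma> \<or> cyl \<sigma> \<inter> \<Phi> -` cyl \<tau> = {}"
proof (rule ccontr)
  assume "\<not> ?thesis"
  then obtain X Y where "X \<in> cyl \<sigma>" "Y \<notin> cyl \<sigma>" "\<Phi> X \<in> cyl \<tau>" "\<Phi> Y \<in> cyl \<tau>" by blast
  then show False
    using separated_beyond_sep_depth[OF assms] unfolding mem_cyl_iff by metis
qed

lemma card_extensions: "real (card (extensions \<sigma>)) = 2 ^ (in_depth \<sigma> - length \<sigma>)"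
proof -
  have "extensions \<sigma> = input_codes (in_depth \<sigma>) \<sigma> []"
    unfolding extensions_def input_codes_def by (simp add: init_seg_def)
  then have "cyl \<sigma> = (\<Union>x\<in>extensions \<sigma>. cyl (bits_of (in_depth \<sigma>) x))"
    using cyl_inter_preimage_eq[where \<tau> = "[]", OF _ in_depth_ge[of \<sigma>]]
    by (simp add: determines_def)
  then have "mu (cyl \<sigma>) = card (extensions \<sigma>) / 2 ^ in_depth \<sigma>"
    using mu_UN_cyl_bits[OF extensions_subset] by simp
  then have "real (card (extensions \<sigma>)) = 2 ^ in_depth \<sigma> / 2 ^ length \<sigma>"
    by (simp add: mu_cyl field_simps)
  also have "\<dots> = 2 ^ (in_depth \<sigma> - length \<sigma>)"
    using in_depth_ge[of \<sigma>] by (simp add: power_diff)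
  finally show ?thesis .
qed

lemma mu_cyl_inter_preimage_sep_depth:
  assumes "length \<tau> = sep_depth \<sigma>"
  shows "mu (cyl \<sigma> \<inter> \<Phi> -` cyl \<tau>) = card {x \<in> extensions \<sigma>. image_prefix \<sigma> x = \<tau>} / 2 ^ in_depth \<sigma>"
proof -
  have "cyl \<sigma> \<inter> \<Phi> -` cyl \<tau>
      = (\<Union>x\<in>{x \<in> extensions \<sigma>. image_prefix \<sigma> x = \<tau>}. cyl (bits_of (in_depth \<sigma>) x))"
    using cyl_inter_preimage_eq[OF determines_in_depth[of \<sigma>, folded assms] in_depth_ge]
    unfolding extensions_def image_prefix_def input_codes_def assms by (simp add: conj_assoc)
  moreover have "{x \<in> extensions \<sigma>. image_prefix \<sigma> x = \<tau>} \<subseteq> {..<2 ^ in_depth \<sigma>}"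
    using extensions_subset[of \<sigma>] by blast
  ultimately show ?thesis by (simp add: mu_UN_cyl_bits)
qed

end

locale computable_Phi_martingale = injective_computable_cantor_map +
  fixes b :: "bool list \<Rightarrow> real"
  assumes Phi_martingale: "Phi_martingale \<Phi> b"
begin

lemma b_nonneg: "b \<tau> \<ge> 0"
  using Phi_martingale unfolding Phi_martingale_def by blast

definition weighted_sum :: "bool list \<Rightarrow> nat \<Rightarrow> real" where
  "weighted_sum \<sigma> n = (\<Sum>\<tau>\<in>{\<tau>. length \<tau> = n}. b \<tau> * mu (cyl \<sigma> \<inter> \<Phi> -` cyl \<tau>))"

definition limit_mart :: "bool list \<Rightarrow> real" where
  "limit_mart \<sigma> = (\<Sum>x\<in>extensions \<sigma>. b (image_prefix \<sigma> x)) / 2 ^ (in_depth \<sigma> - length \<sigma>)"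

lemma weighted_sum_Suc:
  assumes "sep_depth \<sigma> \<le> n"
  shows "weighted_sum \<sigma> (Suc n) = weighted_sum \<sigma> n"
proof -
  have "b (\<tau> @ [False]) * mu (cyl \<sigma> \<inter> \<Phi> -` cyl (\<tau> @ [False]))
        + b (\<tau> @ [True]) * mu (cyl \<sigma> \<inter> \<Phi> -` cyl (\<tau> @ [True]))
      = b \<tau> * mu (cyl \<sigma> \<inter> \<Phi> -` cyl \<tau>)" if len: "length \<tau> = n" for \<tau>
  proof -
    have snoc: "\<Phi> -` cyl (\<tau> @ [c]) \<subseteq> \<Phi> -` cyl \<tau>" for c
      using cyl_eq_Un_snoc[of \<tau>] by (cases c) auto
    consider "\<Phi> -` cyl \<tau> \<subseteq> cyl \<sigma>" | "cyl \<sigma> \<inter> \<Phi> -` cyl \<tau> = {}"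
      using preimage_cyl_subset_or_disjoint[of \<sigma> \<tau>] assms len by auto
    then show ?thesis
    proof cases
      case 1
      then have "cyl \<sigma> \<inter> \<Phi> -` cyl (\<tau> @ [c]) = \<Phi> -` cyl (\<tau> @ [c])" for c
        using snoc[of c] by blast
      moreover have "cyl \<sigma> \<inter> \<Phi> -` cyl \<tau> = \<Phi> -` cyl \<tau>"
        using 1 by blast
      moreover have "b \<tau> * mu (\<Phi> -` cyl \<tau>) = b (\<tau> @ [False]) * mu (\<Phi> -` cyl (\<tau> @ [False]))
          + b (\<tau> @ [True]) * mu (\<Phi> -` cyl (\<tau> @ [True]))"
        using Phi_martingale unfolding Phi_martingale_def by blast
      ultimately show ?thesis by (simp only:)
    next
      case 2
      then have "cyl \<sigma> \<inter> \<Phi> -` cyl (\<tau> @ [c]) = {}" for c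
        using snoc[of c] by blast
      with 2 show ?thesis by (simp add: mu_def)
    qed
  qed
  then show ?thesis
    unfolding weighted_sum_def sum_lists_length_Suc by (intro sum.cong) simp_all
qed

lemma weighted_sum_eventually_const:
  "sep_depth \<sigma> \<le> n \<Longrightarrow> weighted_sum \<sigma> n = weighted_sum \<sigma> (sep_depth \<sigma>)"
proof (induction n rule: dec_induct)
  case (step n)
  then show ?case using weighted_sum_Suc[of \<sigma> n] by simp
qed simp

lemma weighted_sum_sep_depth:
  "weighted_sum \<sigma> (sep_depth \<sigma>) = (\<Sum>x\<in>extensions \<sigma>. b (image_prefix \<sigma> x)) / 2 ^ in_depth \<sigma>"
proof -
  let ?T = "{\<tau> :: bool list. length \<tau> = sep_depth \<sigma>}"
  let ?E = "\<lambda>\<tau>. {x \<in> extensions \<sigma>. image_prefix \<sigma> x = \<tau>}"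
  have "weighted_sum \<sigma> (sep_depth \<sigma>) = (\<Sum>\<tau>\<in>?T. (\<Sum>x\<in>?E \<tau>. b (image_prefix \<sigma> x)) / 2 ^ in_depth \<sigma>)"
    unfolding weighted_sum_def by (intro sum.cong) (simp_all add: mu_cyl_inter_preimage_sep_depth)
  also have "\<dots> = (\<Sum>\<tau>\<in>?T. \<Sum>x\<in>?E \<tau>. b (image_prefix \<sigma> x)) / 2 ^ in_depth \<sigma>"
    by (simp add: sum_divide_distrib)
  also have "(\<Sum>\<tau>\<in>?T. \<Sum>x\<in>?E \<tau>. b (image_prefix \<sigma> x)) = (\<Sum>x\<in>extensions \<sigma>. b (image_prefix \<sigma> x))"
    by (rule sum.group) (auto simp: finite_extensions finite_list_length image_prefix_def)
  finally show ?thesis .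
qed

lemma limit_mart_eq_weighted_sum:
  assumes "sep_depth \<sigma> \<le> n"
  shows "limit_mart \<sigma> = weighted_sum \<sigma> n / mu (cyl \<sigma>)"
proof -
  have "(2::real) ^ in_depth \<sigma> = 2 ^ (in_depth \<sigma> - length \<sigma>) * 2 ^ length \<sigma>"
    using in_depth_ge[of \<sigma>] by (simp add: power_add[symmetric])
  then show ?thesis
    unfolding weighted_sum_eventually_const[OF assms] weighted_sum_sep_depth limit_mart_def mu_cyl
    by (simp add: field_simps)
qed

lemma tendsto_limit_mart:
  "(\<lambda>n. \<Sum>\<tau>\<in>{\<tau>. length \<tau> = n}. b \<tau> * (mu (cyl \<sigma> \<inter> \<Phi> -` cyl \<tau>) / mu (cyl \<sigma>))) \<longlonglongrightarrow> limit_mart \<sigma>"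
proof (rule tendsto_eventually)
  have "(\<Sum>\<tau>\<in>{\<tau>. length \<tau> = n}. b \<tau> * (mu (cyl \<sigma> \<inter> \<Phi> -` cyl \<tau>) / mu (cyl \<sigma>))) = limit_mart \<sigma>"
    if "sep_depth \<sigma> \<le> n" for n
    unfolding limit_mart_eq_weighted_sum[OF that] weighted_sum_def by (simp add: sum_divide_distrib)
  then show "\<forall>\<^sub>F n in sequentially.
      (\<Sum>\<tau>\<in>{\<tau>. length \<tau> = n}. b \<tau> * (mu (cyl \<sigma> \<inter> \<Phi> -` cyl \<tau>) / mu (cyl \<sigma>))) = limit_mart \<sigma>"
    unfolding eventually_sequentially by blast
qed

lemma weighted_sum_snoc:
  "weighted_sum \<sigma> n = weighted_sum (\<sigma> @ [False]) n + weighted_sum (\<sigma> @ [True]) n"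
  unfolding weighted_sum_def sum.distrib[symmetric]
  by (intro sum.cong refl) (subst mu_cyl_inter_split[OF preimage_cyl_sets], simp add: distrib_left)

lemma martingale_limit_mart: "martingale limit_mart"
  unfolding martingale_def
proof (intro conjI allI)
  fix \<sigma>
  show "0 \<le> limit_mart \<sigma>"
    unfolding limit_mart_def by (intro divide_nonneg_nonneg sum_nonneg b_nonneg) simp
  define n where "n = sep_depth \<sigma> + sep_depth (\<sigma> @ [False]) + sep_depth (\<sigma> @ [True])"
  have "limit_mart (\<sigma> @ [False]) + limit_mart (\<sigma> @ [True])
      = (weighted_sum (\<sigma> @ [False]) n + weighted_sum (\<sigma> @ [True]) n) * 2 ^ Suc (length \<sigma>)"
    by (simp add: limit_mart_eq_weighted_sum[where n = n] n_def mu_cyl algebra_simps)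
  also have "\<dots> = 2 * limit_mart \<sigma>"
    by (simp add: limit_mart_eq_weighted_sum[where n = n] n_def mu_cyl weighted_sum_snoc[symmetric])
  finally show "limit_mart (\<sigma> @ [False]) + limit_mart (\<sigma> @ [True]) = 2 * limit_mart \<sigma>" .
qed

end

section \<open>Computing the limit martingale\<close>

text \<open>
  \<open>ab\<close> approximates \<open>b(\<tau>)\<close> to within \<open>2^-(k+1)\<close> by \<open>p / q\<close>, with the integer \<open>p\<close> coded by
  \<open>int_encode\<close> (even codes are the nonnegative integers). \<open>scaled_approx\<close> clips \<open>p\<close> at \<open>0\<close> and
  returns \<open>\<lfloor>p 2^(k+1) / q\<rfloor>\<close>; \<open>limit_approx\<close> sums these over the extensions of \<open>\<sigma>\<close> and encodes
  the resulting dyadic rational for \<open>rat_decode\<close>, doubling the numerator for \<open>int_encode\<close>.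
\<close>

definition scaled_approx :: "(nat \<Rightarrow> nat) \<Rightarrow> nat \<Rightarrow> nat \<Rightarrow> nat" where
  "scaled_approx ab t k = (if even (pfst (ab (prod_encode (t, Suc k))))
      then pfst (ab (prod_encode (t, Suc k))) div 2 else 0)
          * 2 ^ Suc k div Suc (psnd (ab (prod_encode (t, Suc k))))"

definition approx_sum :: "(nat \<Rightarrow> nat) \<Rightarrow> (nat \<Rightarrow> nat) \<Rightarrow> nat \<Rightarrow> nat \<Rightarrow> nat" where
  "approx_sum h ab c k = (\<Sum>x<2 ^ code_input_depth h c.
      if bits_code (code_length c) x = c
      then scaled_approx ab (output_code h x (code_input_depth h c) (separation_depth h c)) k
      else 0)"

definition limit_approx :: "(nat \<Rightarrow> nat) \<Rightarrow> (nat \<Rightarrow> nat) \<Rightarrow> nat \<Rightarrow> nat" where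
  "limit_approx h ab p = prod_encode (2 * approx_sum h ab (pfst p) (psnd p),
      2 ^ (Suc (psnd p) + (code_input_depth h (pfst p) - code_length (pfst p))) - 1)"

lemma div_bounds: "real (m div n) \<le> real m / real n" "real m / real n < real (m div n) + 1"
proof -
  have "real (m div n) = of_int \<lfloor>real m / real n\<rfloor>"
    by (simp add: floor_divide_of_nat_eq)
  then show "real (m div n) \<le> real m / real n" "real m / real n < real (m div n) + 1"
    by (simp_all add: of_int_floor_le real_of_int_floor_add_one_gt)
qed

lemma rat_decode_dyadic: "rat_decode (prod_encode (2 * D, 2 ^ e - 1)) = real D / 2 ^ e"
proof -
  have "int_decode (2 * D) = int D" by (simp add: int_decode_def sum_decode_def)
  moreover have "Suc (2 ^ e - 1) = (2::nat) ^ e" by simp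
  ultimately show ?thesis unfolding rat_decode_def by simp
qed

lemma rat_decode_eq: "rat_decode r = of_int (int_decode (pfst r)) / real (Suc (psnd r))"
  unfolding rat_decode_def by (simp add: case_prod_beta)

lemma scaled_approx_correct:
  assumes ap: "\<And>k'. \<bar>rat_decode (ab (prod_encode (t, k'))) - \<beta>\<bar> \<le> 1 / 2 ^ k'" and b0: "\<beta> \<ge> 0"
  shows "\<bar>real (scaled_approx ab t k) / 2 ^ Suc k - \<beta>\<bar> \<le> 1 / 2 ^ k"
proof -
  define r where "r = ab (prod_encode (t, Suc k))"
  define a where "a = pfst r"
  define D where "D = Suc (psnd r)"
  define q where "q = of_int (int_decode a) / real D"
  define u where "u = (if even a then a div 2 else 0)"
  have q: "\<bar>q - \<beta>\<bar> \<le> 1 / 2 ^ Suc k" using ap[of "Suc k"]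
    unfolding q_def a_def D_def r_def rat_decode_eq .
  have Dp: "0 < D" "0 < real D" unfolding D_def by simp_all
  have uq: "\<bar>real u / real D - \<beta>\<bar> \<le> \<bar>q - \<beta>\<bar>"
  proof (cases "even a")
    case True
    then have "int_decode a = int (a div 2)" by (simp add: int_decode_def sum_decode_def)
    then show ?thesis using True unfolding q_def u_def by simp
  next
    case False
    then have "int_decode a = - int (a div 2) - 1" by (simp add: int_decode_def sum_decode_def)
    then have "q < 0" unfolding q_def using Dp by (simp add: divide_neg_pos)
    then show ?thesis using False b0 unfolding u_def by simp
  qed
  have dv: "scaled_approx ab t k = u * 2 ^ Suc k div D"
    unfolding scaled_approx_def u_def D_def a_def r_def ..
  have d1: "real (scaled_approx ab t k) \<le> real (u * 2 ^ Suc k) / real D"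
    unfolding dv by (rule div_bounds(1))
  have d2: "real (u * 2 ^ Suc k) / real D < real (scaled_approx ab t k) + 1"
    unfolding dv by (rule div_bounds(2))
  have p: "(0::real) < 2 ^ Suc k" by simp
  have "real (scaled_approx ab t k) / 2 ^ Suc k \<le> real u / real D"
    using d1 p Dp by (simp add: divide_le_eq field_simps)
  moreover have "real u / real D < real (scaled_approx ab t k) / 2 ^ Suc k + 1 / 2 ^ Suc k"
    using d2 p Dp by (simp add: field_simps)
  ultimately have "\<bar>real (scaled_approx ab t k) / 2 ^ Suc k - real u / real D\<bar> \<le> 1 / 2 ^ Suc k"
    by linarith
  then have "\<bar>real (scaled_approx ab t k) / 2 ^ Suc k - \<beta>\<bar> \<le> 1 / 2 ^ Suc k + 1 / 2 ^ Suc k"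
    using uq q by linarith
  then show ?thesis by simp
qed

context injective_computable_cantor_map
begin

lemma computable_separation_depth:
  "computable_nat f \<Longrightarrow> computable_nat (\<lambda>z. separation_depth h (f z))"
proof -
  have "computable_nat (separation_depth h)" unfolding separation_depth_def
  proof (rule computable_Least[where P = "\<lambda>n c. \<not> is_code c \<or> separates h (code_length c) c n"])
    show "computable_pred (\<lambda>p. \<not> is_code (psnd p) \<or>
        separates h (code_length (psnd p)) (psnd p) (pfst p))"
      by (intro computable_intros computable_pred_is_code computable_pred_separates
          computable_code_length)
  qed (rule ex_separates)
  then show "computable_nat f \<Longrightarrow> ?thesis" using computable_comp by blast
qed

lemma computable_code_input_depth:
  "computable_nat f \<Longrightarrow> computable_nat (\<lambda>z. code_input_depth h (f z))"
  unfolding code_input_depth_def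
  by (intro computable_input_depth computable_code_length computable_separation_depth)

lemma computable_limit_approx:
  assumes ab: "computable_nat ab"
  shows "computable_nat (limit_approx h ab)"
proof -
  have dv: "computable_nat (\<lambda>q. scaled_approx ab (pfst q) (psnd q))" unfolding scaled_approx_def
    by (intro computable_intros computable_comp[OF ab])
  have D: "computable_nat (\<lambda>q. approx_sum h ab (pfst q) (psnd q))" unfolding approx_sum_def
    by (intro computable_intros computable_sum computable_comp_pair[OF dv] computable_output_code
        computable_code_input_depth computable_separation_depth computable_bits_code
        computable_code_length)
  show ?thesis unfolding limit_approx_def[abs_def]
    by (intro computable_intros computable_comp_pair[OF D] computable_code_input_depth
        computable_code_length)
qed

lemma approx_sum_code_str:
  "approx_sum h ab (code_str \<sigma>) k =
   (\<Sum>x\<in>extensions \<sigma>. scaled_approx ab (code_str (image_prefix \<sigma> x)) k)"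
proof -
  define L where "L = in_depth \<sigma>"
  have output_code_image: "output_code h x L (sep_depth \<sigma>) = code_str (image_prefix \<sigma> x)" for x
  proof -
    have "bits_of L x = init_seg (zero_ext (bits_of L x)) L"
      by (simp add: init_seg_zero_ext)
    from output_code_eq[OF determines_in_depth this[unfolded L_def]] show ?thesis
      unfolding image_prefix_def L_def .
  qed
  have "{x \<in> {..<2 ^ L}. bits_code (length \<sigma>) x = code_str \<sigma>} = extensions \<sigma>"
    unfolding extensions_def L_def by (auto simp: bits_code_eq dest: code_str_inject)
  then have "approx_sum h ab (code_str \<sigma>) k
      = (\<Sum>x\<in>extensions \<sigma>. scaled_approx ab (output_code h x L (sep_depth \<sigma>)) k)"
    unfolding approx_sum_def code_length_code_str sep_depth_def[symmetric] in_depth_def[symmetric]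
        L_def
    by (simp add: sum.inter_filter[symmetric])
  then show ?thesis unfolding output_code_image .
qed

end

context computable_Phi_martingale
begin

lemma limit_approx_correct:
  assumes approx: "\<And>\<tau> k. \<bar>rat_decode (ab (prod_encode (code_str \<tau>, k))) - b \<tau>\<bar> \<le> 1 / 2 ^ k"
  shows "\<bar>rat_decode (limit_approx h ab (prod_encode (code_str \<sigma>, k))) - limit_mart \<sigma>\<bar> \<le> 1 / 2 ^ k"
proof -
  define d where "d = in_depth \<sigma> - length \<sigma>"
  define err where "err x = real (scaled_approx ab (code_str (image_prefix \<sigma> x)) k) / 2 ^ Suc k
      - b (image_prefix \<sigma> x)" for x
  have encoded: "limit_approx h ab (prod_encode (code_str \<sigma>, k))
      = prod_encode (2 * approx_sum h ab (code_str \<sigma>) k, 2 ^ (Suc k + d) - 1)"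
    unfolding limit_approx_def d_def in_depth_def by (simp add: code_length_code_str)
  have "rat_decode (limit_approx h ab (prod_encode (code_str \<sigma>, k))) - limit_mart \<sigma>
      = (\<Sum>x\<in>extensions \<sigma>. err x) / 2 ^ d"
    unfolding encoded rat_decode_dyadic approx_sum_code_str limit_mart_def err_def d_def[symmetric]
    by (simp add: power_add sum_subtractf sum_divide_distrib[symmetric] diff_divide_distrib)
  moreover have "\<bar>\<Sum>x\<in>extensions \<sigma>. err x\<bar> \<le> (\<Sum>x\<in>extensions \<sigma>. 1 / 2 ^ k)"
    unfolding err_def
    by (intro order.trans[OF sum_abs] sum_mono scaled_approx_correct approx b_nonneg)
  moreover have "(\<Sum>x\<in>extensions \<sigma>. 1 / 2 ^ k) / 2 ^ d = (1::real) / 2 ^ k"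
    using card_extensions[of \<sigma>] unfolding d_def by simp
  ultimately show ?thesis
    by (metis abs_divide abs_of_pos divide_right_mono zero_less_numeral zero_less_power
        zero_le_numeral zero_le_power)
qed

end

theorem lemmaL3:
  fixes \<Phi> :: "(nat \<Rightarrow> bool) \<Rightarrow> (nat \<Rightarrow> bool)" and b :: "bool list \<Rightarrow> real"
  assumes "computable_cantor \<Phi>" and "inj \<Phi>"
    and "Phi_martingale \<Phi> b" and "computable_strfun b"
  shows "\<exists>b'. (\<forall>\<sigma>. (\<lambda>n. \<Sum>\<tau>\<in>{\<tau>. length \<tau> = n}. b \<tau> * (mu (cyl \<sigma> \<inter> \<Phi> -` cyl \<tau>) / mu (cyl \<sigma>)))
                     \<longlonglongrightarrow> b' \<sigma>)
             \<and> martingale b' \<and> computable_strfun b'"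
proof -
  obtain h where "computable_nat h"
      and "\<And>X n. (\<exists>k. h (prod_encode (code_str (init_seg X k), n)) < 2) \<and>
      (\<forall>k. h (prod_encode (code_str (init_seg X k), n)) < 2 \<longrightarrow>
           h (prod_encode (code_str (init_seg X k), n)) = of_bool (\<Phi> X n))"
    using assms(1) unfolding computable_cantor_def by blast
  then interpret computable_Phi_martingale \<Phi> h b
    using assms(2,3) by unfold_locales auto
  obtain ab where "computable_nat ab"
    and "\<And>\<tau> k. \<bar>rat_decode (ab (prod_encode (code_str \<tau>, k))) - b \<tau>\<bar> \<le> 1 / 2 ^ k"
    using assms(4) unfolding computable_strfun_def by blast
  then have "computable_strfun limit_mart"
    unfolding computable_strfun_def using computable_limit_approx limit_approx_correct by blast
  then show ?thesis
    using tendsto_limit_mart martingale_limit_mart by blast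
qed

end
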